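(* Let $F$ be an admissible fundamental matrix on $J$. Then there is a constant $C>0$ such that $|\psi_F(a,g)|\le C\|g\|_Y$ for all $g\in Y$ and $a\in J$. Furthermore, for every $g\in Y$ the map $a\mapsto\psi_F(a,g)$, $J\to\mathbb{R}$, is continuous.
   Context: Notation: $A^j{}_k$ is the entry in row $j$, column $k$; a prime denotes $\partial_y$; $\varphi(y,\alpha):=-\frac{2\alpha}{(1-y)^2}+\frac{2\alpha}{1-y}-\frac{2}{\alpha}\log(1-y)$; each occurrence of $\mathcal P(y)$ denotes some polynomial in $y$ with complex coefficients independent of $a$ (different occurrences may differ). Let $a_*\in\mathbb{R}\setminus\{0\}$, $J\subset\mathbb{R}\setminus\{-a_*\}$ compact. An admissible right fundamental matrix $F_R(y,a)$, $(y,a)\in[0,1)\times J$, is the real $4\times4$ matrix with $j$-th column $(\Re f_j,\Im f_j,\Re f_j',\Im f_j')^T(y,a)$, where $\det F_R\neq0$ on $[0,1)\times J$ and $f_1=1+\frac{a_*+a+i}{2(a_*+a)}(1-y)+(1-y)^2\mathcal P(y)$, $f_2=i+i\frac{a_*+a+i}{2(a_*+a)}(1-y)+(1-y)^2\mathcal P(y)$, $f_3=e^{i\varphi(y,a_*+a)}(1-y)[1+\frac{2(a_*+a)-i}{2(a_*+a)}(1-y)+(1-y)^2\mathcal P(y)]+e^{-i\varphi(y,a_*+a)}(1-y)^5\mathcal P(y)$, $f_4=ie^{i\varphi(y,a_*+a)}(1-y)[1+\frac{2(a_*+a)-i}{2(a_*+a)}(1-y)+(1-y)^2\mathcal P(y)]+ie^{-i\varphi(y,a_*+a)}(1-y)^5\mathcal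 P(y)$. An admissible left fundamental matrix $F_L(y)$, $y\in(-1,0]$, is the real $4\times4$ matrix with columns $(\Re g_j,\Im g_j,\Re g_j',\Im g_j')^T$, $\det F_L\neq0$ on $(-1,0]$, $g_1=1+(1+y)\mathcal P(y)$, $g_2=i+(1+y)\mathcal P(y)$, $g_3=\frac{1}{1+y}[1+(1+y)\mathcal P(y)]$, $g_4=\frac{i}{1+y}[1+(1+y)\mathcal P(y)]$. With $M_F(a):=F_L(0)^{-1}F_R(0,a)$, the admissible fundamental matrix on $J$ is $F(y,a):=F_L(y)M_F(a)$ for $y\in(-1,0]$, $F(y,a):=F_R(y,a)$ for $y\in(0,1)$, assuming $M_F(a)^3{}_1\neq0$ for all $a\in J$. $Y$ is the space of $f\in C(-1,1)$ with $(1+y)(1-y)^2f(y)$ extending continuously to $[-1,1]$, $\|f\|_Y:=\sup_{(-1,1)}(1+y)(1-y)^2|f(y)|$. For $g\in Y$: $\alpha_F^k(a,g)(y):=F^{-1}(y,a)^k{}_3\Re g(y)+F^{-1}(y,a)^k{}_4\Im g(y)$ ($(k,\ell)$ entries of $F(y,a)^{-1}$), and \[ \psi_F(a,g):=\sum_{k=3}^4\Big[M_F(a)^4{}_1\frac{M_F(a)^3{}_k}{M_F(a)^3{}_1}-M_F(a)^4{}_k\Big]\int_{-1}^1\alpha_F^k(a,g)(x)dx. \] *)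

theory Defs
  imports "HOL-Analysis.Analysis" "HOL-Computational_Algebra.Polynomial"
begin

text \<open>Matrices are real^4^4 (HOL-Analysis); the paper's index j (row) and k (column),
  j,k in 1..4, are the numerals 1,2,3,4 of the index type 4 (4 is a distinct element).
  Entry A^j_k is A $ j $ k.\<close>

definition phi :: "real \<Rightarrow> real \<Rightarrow> real" where
  "phi y \<alpha> = - 2 * \<alpha> / (1 - y)^2 + 2 * \<alpha> / (1 - y) - 2 / \<alpha> * ln (1 - y)"

definition col4 :: "real \<Rightarrow> real \<Rightarrow> real \<Rightarrow> real \<Rightarrow> real^4" where
  "col4 a b c d = (\<chi> i. if i = 1 then a else if i = 2 then b else if i = 3 then c else d)"

definition sol_col :: "(real \<Rightarrow> complex) \<Rightarrow> real \<Rightarrow> real^4" where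
  "sol_col f y = col4 (Re (f y)) (Im (f y))
      (Re (vector_derivative f (at y))) (Im (vector_derivative f (at y)))"

definition mat_of_cols4 :: "real^4 \<Rightarrow> real^4 \<Rightarrow> real^4 \<Rightarrow> real^4 \<Rightarrow> real^4^4" where
  "mat_of_cols4 v1 v2 v3 v4 =
     (\<chi> r c. (if c = 1 then v1 else if c = 2 then v2 else if c = 3 then v3 else v4) $ r)"

definition fund_mat ::
  "(real \<Rightarrow> complex) \<Rightarrow> (real \<Rightarrow> complex) \<Rightarrow> (real \<Rightarrow> complex) \<Rightarrow> (real \<Rightarrow> complex)
     \<Rightarrow> real \<Rightarrow> real^4^4" where
  "fund_mat f1 f2 f3 f4 y = mat_of_cols4 (sol_col f1 y) (sol_col f2 y) (sol_col f3 y) (sol_col f4 y)"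

definition fR1 :: "complex poly \<Rightarrow> real \<Rightarrow> real \<Rightarrow> complex" where
  "fR1 p \<alpha> y = 1 + (of_real \<alpha> + \<i>) / (2 * of_real \<alpha>) * of_real (1 - y)
       + of_real ((1 - y)^2) * poly p (of_real y)"

definition fR2 :: "complex poly \<Rightarrow> real \<Rightarrow> real \<Rightarrow> complex" where
  "fR2 p \<alpha> y = \<i> + \<i> * (of_real \<alpha> + \<i>) / (2 * of_real \<alpha>) * of_real (1 - y)
       + of_real ((1 - y)^2) * poly p (of_real y)"

definition fR3 :: "complex poly \<Rightarrow> complex poly \<Rightarrow> real \<Rightarrow> real \<Rightarrow> complex" where
  "fR3 p q \<alpha> y =
     exp (\<i> * of_real (phi y \<alpha>)) * of_real (1 - y)
       * (1 + (2 * of_real \<alpha> - \<i>) / (2 * of_real \<alpha>) * of_real (1 - y)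
            + of_real ((1 - y)^2) * poly p (of_real y))
     + exp (- \<i> * of_real (phi y \<alpha>)) * of_real ((1 - y)^5) * poly q (of_real y)"

definition fR4 :: "complex poly \<Rightarrow> complex poly \<Rightarrow> real \<Rightarrow> real \<Rightarrow> complex" where
  "fR4 p q \<alpha> y =
     \<i> * exp (\<i> * of_real (phi y \<alpha>)) * of_real (1 - y)
       * (1 + (2 * of_real \<alpha> - \<i>) / (2 * of_real \<alpha>) * of_real (1 - y)
            + of_real ((1 - y)^2) * poly p (of_real y))
     + \<i> * exp (- \<i> * of_real (phi y \<alpha>)) * of_real ((1 - y)^5) * poly q (of_real y)"

definition admissible_right :: "real \<Rightarrow> real set \<Rightarrow> (real \<Rightarrow> real \<Rightarrow> real^4^4) \<Rightarrow> bool" where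
  "admissible_right as J FR \<longleftrightarrow>
     (\<exists>p1 p2 p3 q3 p4 q4 :: complex poly. \<forall>y\<in>{0..<1}. \<forall>a\<in>J.
        FR y a = fund_mat (fR1 p1 (as + a)) (fR2 p2 (as + a)) (fR3 p3 q3 (as + a))
                          (fR4 p4 q4 (as + a)) y
        \<and> det (FR y a) \<noteq> 0)"

definition gL1 :: "complex poly \<Rightarrow> real \<Rightarrow> complex" where
  "gL1 p y = 1 + of_real (1 + y) * poly p (of_real y)"

definition gL2 :: "complex poly \<Rightarrow> real \<Rightarrow> complex" where
  "gL2 p y = \<i> + of_real (1 + y) * poly p (of_real y)"

definition gL3 :: "complex poly \<Rightarrow> real \<Rightarrow> complex" where
  "gL3 p y = 1 / of_real (1 + y) * (1 + of_real (1 + y) * poly p (of_real y))"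

definition gL4 :: "complex poly \<Rightarrow> real \<Rightarrow> complex" where
  "gL4 p y = \<i> / of_real (1 + y) * (1 + of_real (1 + y) * poly p (of_real y))"

definition admissible_left :: "(real \<Rightarrow> real^4^4) \<Rightarrow> bool" where
  "admissible_left FL \<longleftrightarrow>
     (\<exists>p1 p2 p3 p4 :: complex poly. \<forall>y\<in>{-1<..0}.
        FL y = fund_mat (gL1 p1) (gL2 p2) (gL3 p3) (gL4 p4) y \<and> det (FL y) \<noteq> 0)"

definition MF :: "(real \<Rightarrow> real^4^4) \<Rightarrow> (real \<Rightarrow> real \<Rightarrow> real^4^4) \<Rightarrow> real \<Rightarrow> real^4^4" where
  "MF FL FR a = matrix_inv (FL 0) ** FR 0 a"

definition Ffund :: "(real \<Rightarrow> real^4^4) \<Rightarrow> (real \<Rightarrow> real \<Rightarrow> real^4^4) \<Rightarrow> real \<Rightarrow> real \<Rightarrow> real^4^4" where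
  "Ffund FL FR y a = (if y \<le> 0 then FL y ** MF FL FR a else FR y a)"

definition admissible_fund ::
  "real \<Rightarrow> real set \<Rightarrow> (real \<Rightarrow> real^4^4) \<Rightarrow> (real \<Rightarrow> real \<Rightarrow> real^4^4) \<Rightarrow> bool" where
  "admissible_fund as J FL FR \<longleftrightarrow>
     admissible_right as J FR \<and> admissible_left FL \<and> (\<forall>a\<in>J. MF FL FR a $ 3 $ 1 \<noteq> 0)"

definition inY :: "(real \<Rightarrow> complex) \<Rightarrow> bool" where
  "inY f \<longleftrightarrow> continuous_on {-1<..<1} f \<and>
     (\<exists>h. continuous_on {-1..1} h \<and>
          (\<forall>y\<in>{-1<..<1}. h y = of_real ((1 + y) * (1 - y)^2) * f y))"

definition Ynorm :: "(real \<Rightarrow> complex) \<Rightarrow> real" where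
  "Ynorm f = (SUP y\<in>{-1<..<1}. (1 + y) * (1 - y)^2 * cmod (f y))"

definition alphaF ::
  "(real \<Rightarrow> real^4^4) \<Rightarrow> (real \<Rightarrow> real \<Rightarrow> real^4^4) \<Rightarrow> real \<Rightarrow> (real \<Rightarrow> complex) \<Rightarrow> 4
     \<Rightarrow> real \<Rightarrow> real" where
  "alphaF FL FR a g k y =
     matrix_inv (Ffund FL FR y a) $ k $ 3 * Re (g y) + matrix_inv (Ffund FL FR y a) $ k $ 4 * Im (g y)"

definition psiF ::
  "(real \<Rightarrow> real^4^4) \<Rightarrow> (real \<Rightarrow> real \<Rightarrow> real^4^4) \<Rightarrow> real \<Rightarrow> (real \<Rightarrow> complex) \<Rightarrow> real" where
  "psiF FL FR a g =
     (\<Sum>k\<in>{3, 4::4}.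
        (MF FL FR a $ 4 $ 1 * (MF FL FR a $ 3 $ k / MF FL FR a $ 3 $ 1) - MF FL FR a $ 4 $ k)
        * integral {-1..1} (alphaF FL FR a g k))"

end

theory Submission
  imports Defs
begin

(* The functional psi_F(a, g) combines the integrals of alpha_F^k(a, g), k = 3, 4, with
   coefficients that are continuous in a because M_F(a)^3_1 does not vanish on the compact set J.
   The entries of F^-1 in columns 3 and 4 are O((1 + y) (1 - y)^2) uniformly in a, which exactly
   compensates the weight of the Y-norm: alpha_F^k(a, g) is bounded by a constant times |g|_Y,
   and dominated convergence gives continuity in a.
   The entry bounds come from rescaling. Multiplying the derivative rows of F_R by (1 - y)^2 gives
   a matrix that depends continuously on (1 - y, a, exp (i phi)) up to y = 1, and there it acts on
   the last two coordinates as 4 (a_* + a) times a rotation, hence is uniformly invertible.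
   Multiplying the derivative rows and the two singular columns of F_L by 1 + y gives a matrix
   that is continuous and invertible on all of [-1, 0]. *)

section \<open>Uniform bounds for families of matrices\<close>

lemma matrix_mul_matrix_inv:
  fixes A :: "real^'n^'n"
  assumes "det A \<noteq> 0"
  shows "A ** matrix_inv A = mat 1" "matrix_inv A ** A = mat 1"
proof -
  have "\<exists>A'. A ** A' = mat 1 \<and> A' ** A = mat 1"
    using assms invertible_det_nz unfolding invertible_def by blast
  then have "A ** matrix_inv A = mat 1 \<and> matrix_inv A ** A = mat 1"
    unfolding matrix_inv_def by (rule someI_ex)
  then show "A ** matrix_inv A = mat 1" "matrix_inv A ** A = mat 1" by auto
qed

lemma matrix_vector_mul_matrix_inv:
  fixes A :: "real^'n^'n"
  assumes "det A \<noteq> 0"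
  shows "A *v (matrix_inv A *v b) = b"
  by (simp add: matrix_vector_mul_assoc matrix_mul_matrix_inv[OF assms])

lemma det_matrix_inv_neq_0:
  fixes A :: "real^'n^'n"
  assumes "det A \<noteq> 0"
  shows "det (matrix_inv A) \<noteq> 0"
  using matrix_mul_matrix_inv(2)[OF assms] det_mul[of "matrix_inv A" A] by auto

lemma norm_matrix_inv_mult_le:
  fixes A M :: "real^'n^'n"
  assumes "det A \<noteq> 0" "det M \<noteq> 0" "c > 0" "\<And>x. c * norm x \<le> norm (M *v x)"
  shows "norm (matrix_inv (A ** M) *v v) \<le> norm (matrix_inv A *v v) / c"
proof -
  define x where "x = matrix_inv (A ** M) *v v"
  have "(A ** M) *v x = v"
    unfolding x_def by (rule matrix_vector_mul_matrix_inv) (simp add: det_mul assms(1,2))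
  then have "A *v (M *v x) = v"
    by (simp add: matrix_vector_mul_assoc)
  then have "M *v x = matrix_inv A *v v"
    using matrix_mul_matrix_inv(2)[OF assms(1)] by (metis matrix_vector_mul_assoc matrix_vector_mul_lid)
  then show ?thesis
    using assms(3) assms(4)[of x] by (simp add: x_def field_simps)
qed

lemma matrix_inv_column_nth: "(matrix_inv A *v axis l 1) $ k = matrix_inv A $ k $ l"
  for A :: "real^'n^'n"
  by (simp add: matrix_vector_mult_def axis_def if_distrib cong: if_cong)

lemma matrix_vector_mult_eq_0_imp_eq_0:
  fixes A :: "real^'n^'n"
  assumes "det A \<noteq> 0" "A *v x = 0"
  shows "x = 0"
  using inj_matrix_vector_mult[of A] assms invertible_det_nz by (metis injD matrix_vector_mult_0_right)

lemma continuous_on_matrix_vector_mult [continuous_intros]: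
  "continuous_on S A \<Longrightarrow> continuous_on S x \<Longrightarrow> continuous_on S (\<lambda>z. (A z :: real^'n^'m) *v x z)"
  unfolding matrix_vector_mult_def by (intro continuous_on_vec_lambda continuous_intros) auto

lemma continuous_on_matrix_matrix_mult [continuous_intros]:
  "continuous_on S A \<Longrightarrow> continuous_on S B
     \<Longrightarrow> continuous_on S (\<lambda>z. (A z :: real^'n^'m) ** (B z :: real^'k^'n))"
  unfolding matrix_matrix_mult_def by (intro continuous_on_vec_lambda continuous_intros) auto

lemma continuous_on_det [continuous_intros]:
  "continuous_on S A \<Longrightarrow> continuous_on S (\<lambda>z. det (A z :: real^'n^'n))"
  unfolding det_def by (intro continuous_intros) auto

lemma matrix_inv_nth_cramer:
  fixes A :: "real^'n^'n"
  assumes "det A \<noteq> 0"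
  shows "matrix_inv A $ k $ l = det (\<chi> i j. if j = k then axis l 1 $ i else A $ i $ j) / det A"
proof -
  have "A *v (matrix_inv A *v axis l 1) = axis l 1"
    by (rule matrix_vector_mul_matrix_inv[OF assms])
  then have "matrix_inv A *v axis l 1 = (\<chi> k. det (\<chi> i j. if j = k then axis l 1 $ i else A $ i $ j) / det A)"
    using cramer[OF assms] by blast
  then have "(matrix_inv A *v axis l 1) $ k = det (\<chi> i j. if j = k then axis l 1 $ i else A $ i $ j) / det A"
    by simp
  then show ?thesis
    by (simp only: matrix_inv_column_nth)
qed

lemma continuous_on_matrix_inv_nth:
  fixes A :: "'a::topological_space \<Rightarrow> real^'n^'n"
  assumes "continuous_on S A" "\<And>z. z \<in> S \<Longrightarrow> det (A z) \<noteq> 0"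
  shows "continuous_on S (\<lambda>z. matrix_inv (A z) $ k $ l)"
proof -
  have "continuous_on S (\<lambda>z. (\<chi> i j. if j = k then axis l 1 $ i else A z $ i $ j) :: real^'n^'n)"
  proof (intro continuous_on_vec_lambda)
    fix i j
    show "continuous_on S (\<lambda>z. if j = k then axis l 1 $ i else A z $ i $ j)"
      by (cases "j = k") (auto intro!: continuous_on_component assms(1))
  qed
  then have "continuous_on S (\<lambda>z. det (\<chi> i j. if j = k then axis l 1 $ i else A z $ i $ j) / det (A z))"
    by (intro continuous_on_divide continuous_on_det assms(1)) (use assms(2) in auto)
  then show ?thesis
    by (rule continuous_on_cong[THEN iffD1, rotated 2]) (auto simp: matrix_inv_nth_cramer assms(2))
qed

lemma weighted_matrix_vector_mult:
  fixes A K :: "real^'n^'n"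
  assumes "\<And>r c. A $ r $ c * d r * e c = K $ r $ c"
  shows "K *v u = (\<chi> r. d r * (A *v (\<chi> c. e c * u $ c)) $ r)"
  unfolding matrix_vector_mult_def vec_eq_iff
  by (auto simp: sum_distrib_left assms[symmetric] mult_ac intro!: sum.cong)

lemma continuous_on_unweight:
  fixes A K :: "'a::topological_space \<Rightarrow> real^'n^'m"
  assumes "continuous_on S K" "\<And>r c. continuous_on S (\<lambda>z. d z r c)"
    and "\<And>z r c. z \<in> S \<Longrightarrow> d z r c \<noteq> 0"
    and "\<And>z r c. z \<in> S \<Longrightarrow> A z $ r $ c * d z r c = K z $ r $ c"
  shows "continuous_on S A"
proof -
  have "continuous_on S (\<lambda>z. \<chi> r c. K z $ r $ c / d z r c)"
    by (intro continuous_on_vec_lambda continuous_on_divide continuous_on_component assms(1,2))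
       (use assms(3) in auto)
  moreover have "(\<chi> r c. K z $ r $ c / d z r c) = A z" if "z \<in> S" for z
  proof -
    have "K z $ r $ c / d z r c = A z $ r $ c" for r c
      using assms(3,4)[OF that, of r c] by (metis nonzero_mult_div_cancel_right)
    then have "(\<chi> r c. K z $ r $ c / d z r c) = (\<chi> r c. A z $ r $ c)"
      by simp
    then show ?thesis by simp
  qed
  ultimately show ?thesis
    using continuous_on_cong by force
qed

lemma norm_matrix_vector_mult_le:
  fixes A :: "real^'n^'m"
  shows "norm (A *v x) \<le> real CARD('m) * real CARD('n) * norm A * norm x"
proof -
  have "\<bar>A $ i $ j\<bar> \<le> norm A" for i j
    using component_le_norm_cart[of "A $ i" j] Finite_Cartesian_Product.norm_nth_le[of A i] by linarith
  then have "onorm ((*v) A) \<le> real CARD('m) * real CARD('n) * norm A"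
    by (rule onorm_le_matrix_component)
  moreover have "norm (A *v x) \<le> onorm ((*v) A) * norm x"
    by (rule onorm[OF matrix_vector_mul_bounded_linear])
  ultimately show ?thesis
    by (meson mult_right_mono norm_ge_zero order_trans)
qed

lemma unit_bound_imp_bounded_below:
  fixes A :: "real^'n^'m"
  assumes "\<And>u. norm u = 1 \<Longrightarrow> c \<le> norm (A *v u)"
  shows "c * norm x \<le> norm (A *v x)"
proof (cases "x = 0")
  case False
  have "c \<le> norm (A *v (x /\<^sub>R norm x))"
    using assms False by simp
  also have "\<dots> = norm (A *v x) / norm x"
    by (simp add: matrix_vector_mult_scaleR divide_inverse_commute)
  finally show ?thesis
    using False by (simp add: field_simps)
qed simp

lemma compact_injective_matrices_bounded_below:
  fixes M :: "'a::metric_space \<Rightarrow> real^'n^'n"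
  assumes "compact S" "continuous_on S M" "\<And>z x. z \<in> S \<Longrightarrow> M z *v x = 0 \<Longrightarrow> x = 0"
  shows "\<exists>c>0. \<forall>z\<in>S. \<forall>x. c * norm x \<le> norm (M z *v x)"
proof (cases "S = {}")
  case True
  then show ?thesis by (intro exI[of _ 1]) auto
next
  case False
  let ?T = "S \<times> sphere (0::real^'n) 1"
  have "norm (axis undefined 1 :: real^'n) = 1" by simp
  then have ne: "?T \<noteq> {}" using False by auto
  have cpt: "compact ?T" by (intro compact_Times assms(1) compact_sphere)
  have cont: "continuous_on ?T (\<lambda>p. norm (M (fst p) *v snd p))"
    by (intro continuous_on_norm continuous_on_matrix_vector_mult continuous_on_snd
        continuous_on_compose2[OF assms(2)] continuous_on_fst continuous_on_id) auto
  obtain p where p: "p \<in> ?T"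
      "\<And>q. q \<in> ?T \<Longrightarrow> norm (M (fst p) *v snd p) \<le> norm (M (fst q) *v snd q)"
    using continuous_attains_inf[OF cpt ne cont] by blast
  show ?thesis
  proof (intro exI conjI ballI allI)
    have "fst p \<in> S" "snd p \<noteq> 0"
      using p(1) by auto
    then show "norm (M (fst p) *v snd p) > 0"
      using assms(3) by auto
    fix z x
    assume "z \<in> S"
    show "norm (M (fst p) *v snd p) * norm x \<le> norm (M z *v x)"
    proof (rule unit_bound_imp_bounded_below)
      fix u :: "real^'n"
      assume "norm u = 1"
      then show "norm (M (fst p) *v snd p) \<le> norm (M z *v u)"
        using p(2)[of "(z, u)"] \<open>z \<in> S\<close> by simp
    qed
  qed
qed

lemma bounded_below_persists_near_0:
  fixes K :: "real \<times> 'a::metric_space \<Rightarrow> real^'n^'n"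
  assumes "compact S" "continuous_on ({0..1} \<times> S) K" "c > 0"
    and "\<And>s x. s \<in> S \<Longrightarrow> c * norm x \<le> norm (K (0, s) *v x)"
  obtains \<delta> where "\<delta> > 0"
    "\<And>t s x. t \<in> {0..1} \<Longrightarrow> t < \<delta> \<Longrightarrow> s \<in> S \<Longrightarrow> c / 2 * norm x \<le> norm (K (t, s) *v x)"
proof -
  define N where "N = real CARD('n) * real CARD('n)"
  have N: "N > 0" by (simp add: N_def)
  then have e: "c / (2 * N) > 0" using assms(3) by simp
  have "uniformly_continuous_on ({0..1} \<times> S) K"
    by (intro compact_uniformly_continuous assms(2) compact_Times compact_Icc assms(1))
  from this[unfolded uniformly_continuous_on_def, rule_format, OF e]
  obtain \<delta> where \<delta>: "\<delta> > 0"
      "\<forall>z\<in>{0..1} \<times> S. \<forall>z'\<in>{0..1} \<times> S. dist z' z < \<delta> \<longrightarrow> dist (K z') (K z) < c / (2 * N)"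
    by blast
  show ?thesis
  proof (rule that[OF \<delta>(1)])
    fix t s and x :: "real^'n"
    assume t: "t \<in> {0..1}" "t < \<delta>" and s: "s \<in> S"
    have "dist (t, s) (0, s) < \<delta>"
      using t by (simp add: dist_Pair_Pair dist_real_def)
    then have "dist (K (t, s)) (K (0, s)) < c / (2 * N)"
      using \<delta>(2) t(1) s by auto
    then have "N * norm (K (t, s) - K (0, s)) \<le> c / 2"
      using N by (simp add: dist_norm field_simps)
    then have "N * norm (K (t, s) - K (0, s)) * norm x \<le> c / 2 * norm x"
      by (rule mult_right_mono) simp
    moreover have "norm (K (t, s) *v x - K (0, s) *v x) \<le> N * norm (K (t, s) - K (0, s)) * norm x"
      using norm_matrix_vector_mult_le[of "K (t, s) - K (0, s)" x]
      by (simp only: N_def matrix_vector_mult_diff_rdistrib)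
    moreover have "norm (K (0, s) *v x) - norm (K (t, s) *v x) \<le> norm (K (t, s) *v x - K (0, s) *v x)"
      using norm_triangle_ineq2[of "K (0, s) *v x" "K (t, s) *v x"] norm_minus_commute by metis
    moreover have "c * norm x \<le> norm (K (0, s) *v x)"
      using assms(4)[OF s] .
    ultimately show "c / 2 * norm x \<le> norm (K (t, s) *v x)"
      by linarith
  qed
qed

section \<open>Bounded integrands on an interval\<close>

lemma inY_weighted_le_Ynorm:
  assumes "inY g" "y \<in> {-1<..<1}"
  shows "(1 + y) * (1 - y)\<^sup>2 * cmod (g y) \<le> Ynorm g"
proof -
  obtain h where h: "continuous_on {-1..1} h"
      "\<And>y. y \<in> {-1<..<1} \<Longrightarrow> h y = of_real ((1 + y) * (1 - y)\<^sup>2) * g y"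
    using assms(1) unfolding inY_def by blast
  have "bounded (h ` {-1..1})"
    by (intro compact_imp_bounded compact_continuous_image h(1) compact_Icc)
  then obtain B where B: "\<And>y. y \<in> {-1..1} \<Longrightarrow> norm (h y) \<le> B"
    unfolding bounded_iff by blast
  have "(1 + y) * (1 - y)\<^sup>2 * cmod (g y) = norm (h y)" if "y \<in> {-1<..<1}" for y
  proof -
    have "norm (h y) = \<bar>(1 + y) * (1 - y)\<^sup>2\<bar> * cmod (g y)"
      by (simp only: h(2)[OF that] norm_mult norm_of_real)
    then show ?thesis using that by simp
  qed
  then have "bdd_above ((\<lambda>y. (1 + y) * (1 - y)\<^sup>2 * cmod (g y)) ` {-1<..<1})"
    using B by (intro bdd_aboveI2[where M = B]) auto
  then show ?thesis
    unfolding Ynorm_def by (rule cSUP_upper[OF assms(2)])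
qed

lemma Ynorm_nonneg: "inY g \<Longrightarrow> 0 \<le> Ynorm g"
  using inY_weighted_le_Ynorm[of g 0] by (simp add: order_trans[OF norm_ge_zero])

lemma open_interval_minus_finite_in_sets_lebesgue:
  "finite E \<Longrightarrow> {a<..<b::real} - E \<in> sets lebesgue"
  by (intro sets_completionI_sets) (simp add: borel_open open_Diff finite_imp_closed)

lemma negligible_Icc_minus_open_interval_minus_finite:
  "finite E \<Longrightarrow> negligible ({a..b::real} - ({a<..<b} - E))"
  by (rule negligible_subset[of "{a, b} \<union> E"]) auto

lemma integrable_on_open_interval_minus_finite_iff:
  fixes f :: "real \<Rightarrow> 'a::banach"
  assumes "finite E"
  shows "f integrable_on ({a<..<b} - E) \<longleftrightarrow> f integrable_on {a..b}"
proof -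
  note N = negligible_Icc_minus_open_interval_minus_finite[OF assms, of a b]
  show ?thesis
  proof
    assume "f integrable_on ({a<..<b} - E)"
    then show "f integrable_on {a..b}"
      by (rule integrable_spike_set) (auto intro: negligible_subset[OF N])
  next
    assume "f integrable_on {a..b}"
    then show "f integrable_on ({a<..<b} - E)"
      by (rule integrable_spike_set) (auto intro: negligible_subset[OF N])
  qed
qed

lemma integral_open_interval_minus_finite:
  fixes f :: "real \<Rightarrow> 'a::banach"
  assumes "finite E"
  shows "integral ({a<..<b} - E) f = integral {a..b} f"
  by (rule integral_subset_negligible)
     (use negligible_Icc_minus_open_interval_minus_finite[OF assms] in auto)

lemma bounded_continuous_integrable_off_finite:
  fixes f :: "real \<Rightarrow> real"
  assumes "continuous_on ({a<..<b} - E) f" "finite E" "a \<le> b"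
    and "\<And>x. x \<in> {a<..<b} - E \<Longrightarrow> \<bar>f x\<bar> \<le> B"
  shows "f integrable_on {a..b}" "\<bar>integral {a..b} f\<bar> \<le> (b - a) * B"
proof -
  let ?D = "{a<..<b} - E"
  have const: "(\<lambda>x. B) integrable_on ?D"
    by (simp add: integrable_on_open_interval_minus_finite_iff[OF assms(2)] integrable_const_ivl)
  have D: "?D \<in> sets lebesgue"
    using assms(2) by (rule open_interval_minus_finite_in_sets_lebesgue)
  have int: "f integrable_on ?D"
    by (rule measurable_bounded_by_integrable_imp_integrable
          [OF continuous_imp_measurable_on_sets_lebesgue[OF assms(1) D] const _ D])
       (use assms(4) in auto)
  then show "f integrable_on {a..b}"
    by (simp add: integrable_on_open_interval_minus_finite_iff[OF assms(2)])
  have "norm (integral ?D f) \<le> integral ?D (\<lambda>x. B)"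
    by (rule integral_norm_bound_integral[OF int const]) (use assms(4) in auto)
  then show "\<bar>integral {a..b} f\<bar> \<le> (b - a) * B"
    using assms(3) by (simp add: integral_open_interval_minus_finite[OF assms(2)])
qed

lemma continuous_on_parametric_integral:
  fixes F :: "'p::metric_space \<Rightarrow> real \<Rightarrow> real"
  assumes "\<And>p. p \<in> P \<Longrightarrow> continuous_on ({a<..<b} - E) (F p)"
    and "\<And>x. x \<in> {a<..<b} - E \<Longrightarrow> continuous_on P (\<lambda>p. F p x)"
    and "\<And>p x. p \<in> P \<Longrightarrow> x \<in> {a<..<b} - E \<Longrightarrow> \<bar>F p x\<bar> \<le> B"
    and "finite E" "a \<le> b"
  shows "continuous_on P (\<lambda>p. integral {a..b} (F p))"
proof (rule continuous_on_sequentiallyI)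
  let ?D = "{a<..<b} - E"
  fix u p
  assume u: "\<forall>n. u n \<in> P" and p: "p \<in> P" and lim: "u \<longlonglongrightarrow> p"
  have int: "F q integrable_on ?D" if "q \<in> P" for q
    using bounded_continuous_integrable_off_finite(1)[OF assms(1)[OF that] assms(4,5) assms(3)[OF that]]
    by (simp add: integrable_on_open_interval_minus_finite_iff[OF assms(4)])
  have const: "(\<lambda>x. B) integrable_on ?D"
    by (simp add: integrable_on_open_interval_minus_finite_iff[OF assms(4)] integrable_const_ivl)
  have "(\<lambda>n. integral ?D (F (u n))) \<longlonglongrightarrow> integral ?D (F p)"
  proof (rule dominated_convergence(2)[OF int const])
    show "u n \<in> P" for n using u by blast
    show "norm (F (u n) x) \<le> B" if "x \<in> ?D" for n x
      using assms(3) u that by auto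
    show "(\<lambda>n. F (u n) x) \<longlonglongrightarrow> F p x" if "x \<in> ?D" for x
      by (rule continuous_on_tendsto_compose[OF assms(2)[OF that] lim p]) (use u in auto)
  qed
  then show "(\<lambda>n. integral {a..b} (F (u n))) \<longlonglongrightarrow> integral {a..b} (F p)"
    by (simp add: integral_open_interval_minus_finite[OF assms(4)])
qed

section \<open>The explicit solutions\<close>

text \<open>\<open>phase_rate (1 - y) \<alpha> = (1 - y)\<^sup>3 \<cdot> \<partial>\<^sub>y phi y \<alpha>\<close> stays bounded as \<open>y \<rightarrow> 1\<close>.\<close>

definition phase_rate :: "real \<Rightarrow> real \<Rightarrow> real" where
  "phase_rate t \<alpha> = - 4 * \<alpha> + 2 * \<alpha> * t + 2 * t\<^sup>2 / \<alpha>"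

lemma phi_has_real_derivative:
  assumes "y < 1" "\<alpha> \<noteq> 0"
  shows "((\<lambda>y. phi y \<alpha>) has_real_derivative phase_rate (1 - y) \<alpha> / (1 - y) ^ 3) (at y)"
proof -
  obtain t where t: "y = 1 - t" "t > 0" using assms(1) by (intro that[of "1 - y"]) auto
  have "((\<lambda>y. phi y \<alpha>) has_real_derivative phase_rate t \<alpha> / t ^ 3) (at (1 - t))"
    unfolding phi_def phase_rate_def
    apply (rule derivative_eq_intros refl | (use t assms in simp; fail))+
    using t assms by (simp add: field_simps) (simp add: numeral_eq_Suc algebra_simps)
  then show ?thesis using t by simp
qed

lemma exp_phi_has_vector_derivative:
  fixes c :: complex
  assumes "y < 1" "\<alpha> \<noteq> 0"
  shows "((\<lambda>y. exp (c * of_real (phi y \<alpha>))) has_vector_derivative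
           c * of_real (phase_rate (1 - y) \<alpha> / (1 - y) ^ 3) * exp (c * of_real (phi y \<alpha>))) (at y)"
proof -
  have "((\<lambda>y. c * of_real (phi y \<alpha>)) has_vector_derivative
          c * of_real (phase_rate (1 - y) \<alpha> / (1 - y) ^ 3)) (at y)"
    by (rule derivative_eq_intros phi_has_real_derivative assms refl)+
  from field_vector_diff_chain_at[OF this DERIV_exp] show ?thesis
    by (simp add: o_def)
qed

lemma poly_has_vector_derivative:
  "((\<lambda>y. poly p (of_real y) :: complex) has_vector_derivative poly (pderiv p) (of_real y)) (at y)"
  by (rule has_vector_derivative_real_field) (rule poly_DERIV)

text \<open>In the variable \<open>t = 1 - y\<close>, \<open>right_val c\<close> is \<open>f\<^sub>1\<close> (\<open>c = 1\<close>) or \<open>f\<^sub>2\<close> (\<open>c = \<i>\<close>)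
  and \<open>right_der c\<close> is \<open>(1 - y)\<^sup>2\<close> times its derivative; \<open>right_osc_val\<close> and \<open>right_osc_der\<close>
  do the same for \<open>f\<^sub>3\<close>, with the phase \<open>exp (\<i> phi)\<close> replaced by a free unit \<open>w\<close>.
  All of them extend continuously to \<open>t = 0\<close>.\<close>

definition right_val :: "complex \<Rightarrow> complex poly \<Rightarrow> real \<Rightarrow> real \<Rightarrow> complex" where
  "right_val c p \<alpha> t = c * (1 + (of_real \<alpha> + \<i>) / (2 * of_real \<alpha>) * of_real t)
     + of_real t ^ 2 * poly p (of_real (1 - t))"

definition right_der :: "complex \<Rightarrow> complex poly \<Rightarrow> real \<Rightarrow> real \<Rightarrow> complex" where
  "right_der c p \<alpha> t = of_real t ^ 2 * (- c * (of_real \<alpha> + \<i>) / (2 * of_real \<alpha>)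
     - 2 * of_real t * poly p (of_real (1 - t)) + of_real t ^ 2 * poly (pderiv p) (of_real (1 - t)))"

lemma fR1_eq_right_val: "fR1 p \<alpha> = (\<lambda>y. right_val 1 p \<alpha> (1 - y))"
  by (simp add: fun_eq_iff fR1_def right_val_def)

lemma fR2_eq_right_val: "fR2 p \<alpha> = (\<lambda>y. right_val \<i> p \<alpha> (1 - y))"
  by (simp add: fun_eq_iff fR2_def right_val_def algebra_simps)

lemma right_val_vector_derivative:
  "of_real ((1 - y)\<^sup>2) * vector_derivative (\<lambda>y. right_val c p \<alpha> (1 - y)) (at y)
     = right_der c p \<alpha> (1 - y)"
proof -
  have "(\<lambda>y. right_val c p \<alpha> (1 - y)) = (\<lambda>y. c * (1 + (of_real \<alpha> + \<i>) / (2 * of_real \<alpha>)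
          * of_real (1 - y)) + of_real ((1 - y) ^ 2) * poly p (of_real y))"
    by (simp add: fun_eq_iff right_val_def)
  moreover have "((\<lambda>y. c * (1 + (of_real \<alpha> + \<i>) / (2 * of_real \<alpha>)
          * of_real (1 - y)) + of_real ((1 - y) ^ 2) * poly p (of_real y)) has_vector_derivative
          - c * (of_real \<alpha> + \<i>) / (2 * of_real \<alpha>) - 2 * of_real (1 - y) * poly p (of_real y)
          + of_real (1 - y) ^ 2 * poly (pderiv p) (of_real y)) (at y)"
    apply (rule has_vector_derivative_eq_rhs)
     apply (rule derivative_eq_intros poly_has_vector_derivative refl)+
    by (simp add: field_simps)
  ultimately show ?thesis
    by (simp add: vector_derivative_at right_der_def)
qed

definition osc_amp :: "complex poly \<Rightarrow> real \<Rightarrow> real \<Rightarrow> complex" where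
  "osc_amp p \<alpha> t = 1 + (2 * of_real \<alpha> - \<i>) / (2 * of_real \<alpha>) * of_real t
     + of_real t ^ 2 * poly p (of_real (1 - t))"

definition osc_amp_deriv :: "complex poly \<Rightarrow> real \<Rightarrow> real \<Rightarrow> complex" where
  "osc_amp_deriv p \<alpha> t = - (2 * of_real \<alpha> - \<i>) / (2 * of_real \<alpha>)
     - 2 * of_real t * poly p (of_real (1 - t)) + of_real t ^ 2 * poly (pderiv p) (of_real (1 - t))"

definition right_osc_val :: "complex poly \<Rightarrow> complex poly \<Rightarrow> real \<Rightarrow> real \<Rightarrow> complex \<Rightarrow> complex" where
  "right_osc_val p q \<alpha> t w = w * of_real t * osc_amp p \<alpha> t + cnj w * of_real t ^ 5 * poly q (of_real (1 - t))"

definition right_osc_der :: "complex poly \<Rightarrow> complex poly \<Rightarrow> real \<Rightarrow> real \<Rightarrow> complex \<Rightarrow> complex" where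
  "right_osc_der p q \<alpha> t w =
     w * (\<i> * of_real (phase_rate t \<alpha>) * osc_amp p \<alpha> t - of_real t ^ 2 * osc_amp p \<alpha> t
          + of_real t ^ 3 * osc_amp_deriv p \<alpha> t)
   + cnj w * (- \<i> * of_real (phase_rate t \<alpha>) * of_real t ^ 4 * poly q (of_real (1 - t))
          - 5 * of_real t ^ 6 * poly q (of_real (1 - t)) + of_real t ^ 7 * poly (pderiv q) (of_real (1 - t)))"

lemma cnj_exp_i_times: "cnj (exp (\<i> * of_real x)) = exp (- \<i> * of_real x)"
  by (simp add: exp_cnj)

lemma fR3_eq_right_osc_val: "fR3 p q \<alpha> y = right_osc_val p q \<alpha> (1 - y) (exp (\<i> * of_real (phi y \<alpha>)))"
  by (simp add: fR3_def right_osc_val_def osc_amp_def cnj_exp_i_times algebra_simps)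

lemma fR4_eq_i_fR3: "fR4 p q \<alpha> = (\<lambda>y. \<i> * fR3 p q \<alpha> y)"
  by (simp add: fun_eq_iff fR4_def fR3_def algebra_simps)

lemma osc_amp_has_vector_derivative:
  "((\<lambda>y. osc_amp p \<alpha> (1 - y)) has_vector_derivative osc_amp_deriv p \<alpha> (1 - y)) (at y)"
proof -
  have "(\<lambda>y. osc_amp p \<alpha> (1 - y)) = (\<lambda>y. 1 + (2 * of_real \<alpha> - \<i>) / (2 * of_real \<alpha>)
          * of_real (1 - y) + of_real ((1 - y) ^ 2) * poly p (of_real y))"
    by (simp add: fun_eq_iff osc_amp_def)
  moreover have "((\<lambda>y. 1 + (2 * of_real \<alpha> - \<i>) / (2 * of_real \<alpha>)
          * of_real (1 - y) + of_real ((1 - y) ^ 2) * poly p (of_real y)) has_vector_derivative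
          osc_amp_deriv p \<alpha> (1 - y)) (at y)"
    unfolding osc_amp_deriv_def
    apply (rule has_vector_derivative_eq_rhs)
     apply (rule derivative_eq_intros poly_has_vector_derivative refl)+
    by (simp add: field_simps)
  ultimately show ?thesis by simp
qed

lemma fR3_has_vector_derivative:
  assumes "y < 1" "\<alpha> \<noteq> 0"
  shows "(fR3 p q \<alpha> has_vector_derivative
           right_osc_der p q \<alpha> (1 - y) (exp (\<i> * of_real (phi y \<alpha>))) / of_real ((1 - y)\<^sup>2)) (at y)"
proof -
  define t where "t = 1 - y"
  define w where "w = exp (\<i> * of_real (phi y \<alpha>))"
  define \<Phi> where "\<Phi> = phase_rate t \<alpha>"
  define U where "U = osc_amp p \<alpha> t"
  define U' where "U' = osc_amp_deriv p \<alpha> t"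
  define Q where "Q = poly q (of_real y)"
  define Q' where "Q' = poly (pderiv q) (of_real y)"
  have t: "(of_real t :: complex) \<noteq> 0" using assms by (simp add: t_def)
  have amp: "((\<lambda>y. of_real (1 - y) * osc_amp p \<alpha> (1 - y)) has_vector_derivative
      - U + of_real t * U') (at y)"
    unfolding t_def U_def U'_def
    apply (rule has_vector_derivative_eq_rhs)
     apply (rule derivative_eq_intros osc_amp_has_vector_derivative refl)+
    by simp
  have tail: "((\<lambda>y. of_real ((1 - y) ^ 5) * poly q (of_real y)) has_vector_derivative
      - 5 * of_real t ^ 4 * Q + of_real t ^ 5 * Q') (at y)"
    unfolding t_def Q_def Q'_def
    apply (rule has_vector_derivative_eq_rhs)
     apply (rule derivative_eq_intros poly_has_vector_derivative refl)+
    by (simp add: algebra_simps)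
  have "fR3 p q \<alpha> = (\<lambda>y. exp (\<i> * of_real (phi y \<alpha>)) * (of_real (1 - y) * osc_amp p \<alpha> (1 - y))
      + exp (- \<i> * of_real (phi y \<alpha>)) * (of_real ((1 - y) ^ 5) * poly q (of_real y)))"
    by (simp add: fun_eq_iff fR3_def osc_amp_def algebra_simps)
  moreover have "((\<lambda>y. exp (\<i> * of_real (phi y \<alpha>)) * (of_real (1 - y) * osc_amp p \<alpha> (1 - y))
      + exp (- \<i> * of_real (phi y \<alpha>)) * (of_real ((1 - y) ^ 5) * poly q (of_real y)))
      has_vector_derivative
        \<i> * of_real (\<Phi> / t ^ 3) * w * (of_real t * U) + w * (- U + of_real t * U')
        - \<i> * of_real (\<Phi> / t ^ 3) * cnj w * (of_real (t ^ 5) * Q)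
        + cnj w * (- 5 * of_real t ^ 4 * Q + of_real t ^ 5 * Q')) (at y)"
    unfolding w_def \<Phi>_def cnj_exp_i_times
    by (rule derivative_eq_intros exp_phi_has_vector_derivative[OF assms] amp tail refl)+
       (simp add: t_def U_def Q_def algebra_simps)
  ultimately have D: "(fR3 p q \<alpha> has_vector_derivative
        \<i> * of_real (\<Phi> / t ^ 3) * w * (of_real t * U) + w * (- U + of_real t * U')
        - \<i> * of_real (\<Phi> / t ^ 3) * cnj w * (of_real (t ^ 5) * Q)
        + cnj w * (- 5 * of_real t ^ 4 * Q + of_real t ^ 5 * Q')) (at y)"
    by simp
  have R: "right_osc_der p q \<alpha> t w
      = w * (\<i> * of_real \<Phi> * U - of_real t ^ 2 * U + of_real t ^ 3 * U')
        + cnj w * (- \<i> * of_real \<Phi> * of_real t ^ 4 * Q - 5 * of_real t ^ 6 * Q + of_real t ^ 7 * Q')"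
    by (simp add: right_osc_der_def \<Phi>_def U_def U'_def Q_def Q'_def t_def)
  show ?thesis
    unfolding t_def[symmetric] w_def[symmetric] R
    by (rule has_vector_derivative_eq_rhs[OF D])
       (use t in \<open>simp add: field_simps power2_eq_square power3_eq_cube numeral_eq_Suc\<close>)
qed

lemma fR34_vector_derivative:
  assumes "y < 1" "\<alpha> \<noteq> 0"
  shows "of_real ((1 - y)\<^sup>2) * vector_derivative (fR3 p q \<alpha>) (at y)
           = right_osc_der p q \<alpha> (1 - y) (exp (\<i> * of_real (phi y \<alpha>)))"
    and "of_real ((1 - y)\<^sup>2) * vector_derivative (fR4 p q \<alpha>) (at y)
           = \<i> * right_osc_der p q \<alpha> (1 - y) (exp (\<i> * of_real (phi y \<alpha>)))"
  using vector_derivative_at[OF fR3_has_vector_derivative[OF assms]]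
    vector_derivative_at[OF has_vector_derivative_mult_right[OF fR3_has_vector_derivative[OF assms], of \<i>]]
    assms
  by (simp_all add: fR4_eq_i_fR3)

text \<open>\<open>left_val\<close> is \<open>g\<^sub>1\<close>, \<open>g\<^sub>2\<close> and \<open>(1 + y) g\<^sub>3\<close>; \<open>left_der\<close> is \<open>1 + y\<close> times the
  derivative of \<open>g\<^sub>1\<close> or \<open>g\<^sub>2\<close>, and \<open>left_sing_der\<close> is \<open>(1 + y)\<^sup>2 g\<^sub>3'\<close>.\<close>

definition left_val :: "complex \<Rightarrow> complex poly \<Rightarrow> real \<Rightarrow> complex" where
  "left_val c p y = c + of_real (1 + y) * poly p (of_real y)"

definition left_der :: "complex poly \<Rightarrow> real \<Rightarrow> complex" where
  "left_der p y = of_real (1 + y) * poly p (of_real y) + of_real (1 + y) ^ 2 * poly (pderiv p) (of_real y)"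

definition left_sing_der :: "complex poly \<Rightarrow> real \<Rightarrow> complex" where
  "left_sing_der p y = - 1 + of_real (1 + y) ^ 2 * poly (pderiv p) (of_real y)"

lemma left_val_vector_derivative:
  "of_real (1 + y) * vector_derivative (left_val c p) (at y) = left_der p y"
proof -
  have "(left_val c p has_vector_derivative poly p (of_real y) + of_real (1 + y) * poly (pderiv p) (of_real y)) (at y)"
    unfolding left_val_def[abs_def]
    apply (rule has_vector_derivative_eq_rhs)
     apply (rule derivative_eq_intros poly_has_vector_derivative refl)+
    by simp
  then show ?thesis
    by (simp add: vector_derivative_at left_der_def algebra_simps power2_eq_square)
qed

lemma gL12_eq_left_val: "gL1 p = left_val 1 p" "gL2 p = left_val \<i> p"
  by (simp_all add: fun_eq_iff gL1_def gL2_def left_val_def)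

lemma gL4_eq_i_gL3: "gL4 p = (\<lambda>y. \<i> * gL3 p y)"
  by (simp add: fun_eq_iff gL4_def gL3_def)

lemma one_plus_of_real_neq_0: "y > -1 \<Longrightarrow> (1 + of_real y :: complex) \<noteq> 0"
  using of_real_eq_0_iff[of "1 + y", where 'a = complex] by simp

lemma gL3_has_vector_derivative:
  assumes "y > -1"
  shows "(gL3 p has_vector_derivative left_sing_der p y / of_real ((1 + y)\<^sup>2)) (at y)"
proof -
  have nz: "(1 + of_real y :: complex) \<noteq> 0" using assms by (rule one_plus_of_real_neq_0)
  have "((\<lambda>y. of_real (1 / (1 + y)) + poly p (of_real y)) has_vector_derivative
          - 1 / of_real ((1 + y)\<^sup>2) + poly (pderiv p) (of_real y)) (at y)"
    apply (rule has_vector_derivative_eq_rhs)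
     apply (rule derivative_eq_intros poly_has_vector_derivative refl | (use assms in simp; fail))+
    using nz by (simp add: field_simps power2_eq_square)
  moreover have "- 1 / of_real ((1 + y)\<^sup>2) + poly (pderiv p) (of_real y)
      = left_sing_der p y / of_real ((1 + y)\<^sup>2)"
    using nz by (simp add: left_sing_der_def field_simps)
  ultimately have "((\<lambda>y. of_real (1 / (1 + y)) + poly p (of_real y)) has_vector_derivative
          left_sing_der p y / of_real ((1 + y)\<^sup>2)) (at y)" by simp
  then show ?thesis
  proof (rule has_vector_derivative_transform_within_open[where S = "{-1<..}"])
    fix x :: real
    assume "x \<in> {-1<..}"
    then have "(1 + of_real x :: complex) \<noteq> 0" by (simp add: one_plus_of_real_neq_0)
    then show "of_real (1 / (1 + x)) + poly p (of_real x) = gL3 p x"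
      unfolding gL3_def by (simp add: field_simps)
  qed (use assms in auto)
qed

lemma gL34_scaled:
  assumes "y > -1"
  shows "of_real (1 + y) * gL3 p y = left_val 1 p y"
    and "of_real (1 + y) * gL4 p y = \<i> * left_val 1 p y"
    and "of_real ((1 + y)\<^sup>2) * vector_derivative (gL3 p) (at y) = left_sing_der p y"
    and "of_real ((1 + y)\<^sup>2) * vector_derivative (gL4 p) (at y) = \<i> * left_sing_der p y"
proof -
  have nz: "(1 + of_real y :: complex) \<noteq> 0" using assms by (rule one_plus_of_real_neq_0)
  show "of_real (1 + y) * gL3 p y = left_val 1 p y"
    using nz by (simp add: gL3_def left_val_def)
  then show "of_real (1 + y) * gL4 p y = \<i> * left_val 1 p y"
    by (simp add: gL4_eq_i_gL3 mult.left_commute)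
  show "of_real ((1 + y)\<^sup>2) * vector_derivative (gL3 p) (at y) = left_sing_der p y"
    "of_real ((1 + y)\<^sup>2) * vector_derivative (gL4 p) (at y) = \<i> * left_sing_der p y"
    using vector_derivative_at[OF gL3_has_vector_derivative[OF assms]]
      vector_derivative_at[OF has_vector_derivative_mult_right[OF gL3_has_vector_derivative[OF assms], of \<i>]]
      nz
    by (simp_all add: gL4_eq_i_gL3)
qed

section \<open>Rescaled fundamental matrices\<close>

lemma col4_nth [simp]:
  "col4 a b c d $ 1 = a" "col4 a b c d $ 2 = b" "col4 a b c d $ 3 = c" "col4 a b c d $ 4 = d"
  by (simp_all add: col4_def)

lemma mat_of_cols4_nth [simp]:
  "mat_of_cols4 v1 v2 v3 v4 $ r $ 1 = v1 $ r" "mat_of_cols4 v1 v2 v3 v4 $ r $ 2 = v2 $ r"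
  "mat_of_cols4 v1 v2 v3 v4 $ r $ 3 = v3 $ r" "mat_of_cols4 v1 v2 v3 v4 $ r $ 4 = v4 $ r"
  by (simp_all add: mat_of_cols4_def)

lemma continuous_on_col4 [continuous_intros]:
  assumes "continuous_on S a" "continuous_on S b" "continuous_on S c" "continuous_on S d"
  shows "continuous_on S (\<lambda>z. col4 (a z) (b z) (c z) (d z))"
  unfolding col4_def
proof (intro continuous_on_vec_lambda)
  fix i :: 4
  show "continuous_on S (\<lambda>z. if i = 1 then a z else if i = 2 then b z else if i = 3 then c z else d z)"
    using assms by (cases "i = 1"; cases "i = 2"; cases "i = 3") simp_all
qed

lemma continuous_on_mat_of_cols4 [continuous_intros]:
  assumes "continuous_on S a" "continuous_on S b" "continuous_on S c" "continuous_on S d"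
  shows "continuous_on S (\<lambda>z. mat_of_cols4 (a z) (b z) (c z) (d z))"
  unfolding mat_of_cols4_def
proof (intro continuous_on_vec_lambda continuous_on_component)
  fix j :: 4
  show "continuous_on S (\<lambda>z. if j = 1 then a z else if j = 2 then b z else if j = 3 then c z else d z)"
    using assms by (cases "j = 1"; cases "j = 2"; cases "j = 3") simp_all
qed

definition complex_col :: "complex \<Rightarrow> complex \<Rightarrow> real^4" where
  "complex_col z z' = col4 (Re z) (Im z) (Re z') (Im z')"

text \<open>Rows 3 and 4 of a fundamental matrix hold the derivatives.\<close>

definition weight34 :: "real \<Rightarrow> 4 \<Rightarrow> real" where
  "weight34 s r = (if r = 3 \<or> r = 4 then s else 1)"

lemma weight34_neq_0: "s \<noteq> 0 \<Longrightarrow> weight34 s r \<noteq> 0"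
  by (simp add: weight34_def)

lemma continuous_on_weight34 [continuous_intros]:
  "continuous_on S s \<Longrightarrow> continuous_on S (\<lambda>z. weight34 (s z) r)"
  by (cases "r = 3 \<or> r = 4") (simp_all add: weight34_def)

lemma sol_col_weighted:
  assumes "of_real d * f y = V" "of_real (s * d) * vector_derivative f (at y) = W"
  shows "sol_col f y $ r * weight34 s r * d = complex_col V W $ r"
proof -
  have "Re V = d * Re (f y)" "Im V = d * Im (f y)"
    "Re W = s * d * Re (vector_derivative f (at y))" "Im W = s * d * Im (vector_derivative f (at y))"
    by (auto simp flip: assms)
  then show ?thesis
    using exhaust_4[of r] by (auto simp: sol_col_def complex_col_def weight34_def)
qed

definition right_rescaled ::
  "complex poly \<Rightarrow> complex poly \<Rightarrow> complex poly \<Rightarrow> complex poly \<Rightarrow> complex poly \<Rightarrow> complex poly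
     \<Rightarrow> real \<Rightarrow> real \<Rightarrow> complex \<Rightarrow> real^4^4" where
  "right_rescaled p1 p2 p3 q3 p4 q4 \<alpha> t w = mat_of_cols4
     (complex_col (right_val 1 p1 \<alpha> t) (right_der 1 p1 \<alpha> t))
     (complex_col (right_val \<i> p2 \<alpha> t) (right_der \<i> p2 \<alpha> t))
     (complex_col (right_osc_val p3 q3 \<alpha> t w) (right_osc_der p3 q3 \<alpha> t w))
     (complex_col (\<i> * right_osc_val p4 q4 \<alpha> t w) (\<i> * right_osc_der p4 q4 \<alpha> t w))"

definition left_rescaled ::
  "complex poly \<Rightarrow> complex poly \<Rightarrow> complex poly \<Rightarrow> complex poly \<Rightarrow> real \<Rightarrow> real^4^4" where
  "left_rescaled l1 l2 l3 l4 y = mat_of_cols4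
     (complex_col (left_val 1 l1 y) (left_der l1 y))
     (complex_col (left_val \<i> l2 y) (left_der l2 y))
     (complex_col (left_val 1 l3 y) (left_sing_der l3 y))
     (complex_col (\<i> * left_val 1 l4 y) (\<i> * left_sing_der l4 y))"

lemma fund_mat_right_rescaled:
  assumes "y < 1" "\<alpha> \<noteq> 0"
  shows "fund_mat (fR1 p1 \<alpha>) (fR2 p2 \<alpha>) (fR3 p3 q3 \<alpha>) (fR4 p4 q4 \<alpha>) y $ r $ c * weight34 ((1 - y)\<^sup>2) r
           = right_rescaled p1 p2 p3 q3 p4 q4 \<alpha> (1 - y) (exp (\<i> * of_real (phi y \<alpha>))) $ r $ c"
proof -
  have "sol_col (fR1 p1 \<alpha>) y $ r * weight34 ((1 - y)\<^sup>2) r * 1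
      = complex_col (right_val 1 p1 \<alpha> (1 - y)) (right_der 1 p1 \<alpha> (1 - y)) $ r"
    "sol_col (fR2 p2 \<alpha>) y $ r * weight34 ((1 - y)\<^sup>2) r * 1
      = complex_col (right_val \<i> p2 \<alpha> (1 - y)) (right_der \<i> p2 \<alpha> (1 - y)) $ r"
    by (rule sol_col_weighted;
        use right_val_vector_derivative in \<open>simp add: fR1_eq_right_val fR2_eq_right_val\<close>)+
  moreover have "sol_col (fR3 p3 q3 \<alpha>) y $ r * weight34 ((1 - y)\<^sup>2) r * 1
      = complex_col (right_osc_val p3 q3 \<alpha> (1 - y) (exp (\<i> * of_real (phi y \<alpha>))))
          (right_osc_der p3 q3 \<alpha> (1 - y) (exp (\<i> * of_real (phi y \<alpha>)))) $ r"
    "sol_col (fR4 p4 q4 \<alpha>) y $ r * weight34 ((1 - y)\<^sup>2) r * 1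
      = complex_col (\<i> * right_osc_val p4 q4 \<alpha> (1 - y) (exp (\<i> * of_real (phi y \<alpha>))))
          (\<i> * right_osc_der p4 q4 \<alpha> (1 - y) (exp (\<i> * of_real (phi y \<alpha>)))) $ r"
    by (rule sol_col_weighted;
        use fR34_vector_derivative[OF assms] in \<open>simp add: fR3_eq_right_osc_val fR4_eq_i_fR3\<close>)+
  ultimately show ?thesis
    using exhaust_4[of c] by (auto simp: fund_mat_def right_rescaled_def)
qed

lemma fund_mat_left_rescaled:
  assumes "y > -1"
  shows "fund_mat (gL1 l1) (gL2 l2) (gL3 l3) (gL4 l4) y $ r $ c * weight34 (1 + y) r * weight34 (1 + y) c
           = left_rescaled l1 l2 l3 l4 y $ r $ c"
proof -
  have "sol_col (gL1 l1) y $ r * weight34 (1 + y) r * 1 = complex_col (left_val 1 l1 y) (left_der l1 y) $ r"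
    "sol_col (gL2 l2) y $ r * weight34 (1 + y) r * 1 = complex_col (left_val \<i> l2 y) (left_der l2 y) $ r"
    by (rule sol_col_weighted; use left_val_vector_derivative in \<open>simp add: gL12_eq_left_val\<close>)+
  moreover have "sol_col (gL3 l3) y $ r * weight34 (1 + y) r * (1 + y)
      = complex_col (left_val 1 l3 y) (left_sing_der l3 y) $ r"
    "sol_col (gL4 l4) y $ r * weight34 (1 + y) r * (1 + y)
      = complex_col (\<i> * left_val 1 l4 y) (\<i> * left_sing_der l4 y) $ r"
    by (rule sol_col_weighted; use gL34_scaled[OF assms] in \<open>simp add: power2_eq_square\<close>)+
  ultimately show ?thesis
    using exhaust_4[of c] by (auto simp: fund_mat_def left_rescaled_def weight34_def)
qed

lemma continuous_on_right_rescaled: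
  assumes "continuous_on S \<alpha>" "continuous_on S t" "continuous_on S w" "\<And>z. z \<in> S \<Longrightarrow> \<alpha> z \<noteq> 0"
  shows "continuous_on S (\<lambda>z. right_rescaled p1 p2 p3 q3 p4 q4 (\<alpha> z) (t z) (w z))"
  unfolding right_rescaled_def complex_col_def right_val_def right_der_def right_osc_val_def
    right_osc_der_def osc_amp_def osc_amp_deriv_def phase_rate_def
  by (intro continuous_intros assms) (auto simp: assms)

lemma continuous_on_left_rescaled: "continuous_on S (left_rescaled l1 l2 l3 l4)"
  unfolding left_rescaled_def complex_col_def left_val_def left_der_def left_sing_der_def
  by (intro continuous_intros)

lemma norm_vec4_squared: "(norm (v :: real^4))\<^sup>2 = (v $ 1)\<^sup>2 + (v $ 2)\<^sup>2 + (v $ 3)\<^sup>2 + (v $ 4)\<^sup>2"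
  by (simp add: norm_vec_def L2_set_def sum_4 sum_nonneg)

text \<open>At the endpoint \<open>t = 0\<close> the oscillating columns reduce to \<open>(0, \<mp>4\<alpha>\<i>w)\<close>, a rotation scaled by \<open>4\<bar>\<alpha>\<bar>\<close>.\<close>

lemma right_rescaled_at_0_bounded_below:
  assumes "norm w = 1"
  shows "min 1 (4 * \<bar>\<alpha>\<bar>) * norm x \<le> norm (right_rescaled p1 p2 p3 q3 p4 q4 \<alpha> 0 w *v x)"
proof -
  let ?v = "right_rescaled p1 p2 p3 q3 p4 q4 \<alpha> 0 w *v x"
  let ?m = "min 1 (4 * \<bar>\<alpha>\<bar>)"
  have w: "(Re w)\<^sup>2 + (Im w)\<^sup>2 = 1" using assms by (metis cmod_power2 power_one)
  have v: "?v $ 1 = x $ 1" "?v $ 2 = x $ 2"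
    "?v $ 3 = 4 * \<alpha> * Im w * x $ 3 + 4 * \<alpha> * Re w * x $ 4"
    "?v $ 4 = 4 * \<alpha> * Im w * x $ 4 - 4 * \<alpha> * Re w * x $ 3"
    by (simp_all add: right_rescaled_def complex_col_def right_val_def right_der_def
        right_osc_val_def right_osc_der_def osc_amp_def phase_rate_def matrix_vector_mult_def sum_4
        algebra_simps)
  have "(norm ?v)\<^sup>2 = (x $ 1)\<^sup>2 + (x $ 2)\<^sup>2 + 16 * \<alpha>\<^sup>2 * ((Re w)\<^sup>2 + (Im w)\<^sup>2) * ((x $ 3)\<^sup>2 + (x $ 4)\<^sup>2)"
    unfolding norm_vec4_squared v by (simp add: power2_eq_square algebra_simps)
  also have "\<dots> = (x $ 1)\<^sup>2 + (x $ 2)\<^sup>2 + (4 * \<bar>\<alpha>\<bar>)\<^sup>2 * ((x $ 3)\<^sup>2 + (x $ 4)\<^sup>2)"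
    using w by (simp add: power2_eq_square)
  also have "\<dots> \<ge> ?m\<^sup>2 * (x $ 1)\<^sup>2 + ?m\<^sup>2 * (x $ 2)\<^sup>2 + ?m\<^sup>2 * ((x $ 3)\<^sup>2 + (x $ 4)\<^sup>2)"
  proof -
    have m: "0 \<le> ?m" "?m \<le> 1" "?m \<le> 4 * \<bar>\<alpha>\<bar>" by auto
    have "?m\<^sup>2 \<le> 1" "?m\<^sup>2 \<le> (4 * \<bar>\<alpha>\<bar>)\<^sup>2"
      using power_mono[OF m(2) m(1), of 2] power_mono[OF m(3) m(1), of 2] by simp_all
    then show ?thesis
      by (intro add_mono mult_right_mono mult_left_le_one_le) auto
  qed
  also have "?m\<^sup>2 * (x $ 1)\<^sup>2 + ?m\<^sup>2 * (x $ 2)\<^sup>2 + ?m\<^sup>2 * ((x $ 3)\<^sup>2 + (x $ 4)\<^sup>2) = (?m * norm x)\<^sup>2"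
    by (simp add: norm_vec4_squared algebra_simps)
  finally show ?thesis
    by (rule power2_le_imp_le) simp
qed

lemma left_rescaled_at_minus_1_injective:
  assumes "left_rescaled l1 l2 l3 l4 (-1) *v x = 0"
  shows "x = 0"
proof -
  let ?v = "left_rescaled l1 l2 l3 l4 (-1) *v x"
  have "?v $ 1 = x $ 1 + x $ 3" "?v $ 2 = x $ 2 + x $ 4" "?v $ 3 = - x $ 3" "?v $ 4 = - x $ 4"
    by (simp_all add: left_rescaled_def complex_col_def left_val_def left_der_def left_sing_der_def
        matrix_vector_mult_def sum_4)
  then show ?thesis
    using assms by (simp add: vec_eq_iff forall_4)
qed

section \<open>Admissible fundamental matrices\<close>

lemma continuous_on_phi [continuous_intros]:
  assumes "continuous_on S f" "continuous_on S g" "\<And>z. z \<in> S \<Longrightarrow> f z < 1 \<and> g z \<noteq> 0"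
  shows "continuous_on S (\<lambda>z. phi (f z) (g z))"
  unfolding phi_def using assms(1,2) by (intro continuous_intros) (auto dest!: assms(3))

lemma compact_bounded_away_from_point:
  fixes J :: "real set"
  assumes "compact J" "- as \<notin> J"
  obtains m where "m > 0" "\<And>a. a \<in> J \<Longrightarrow> m \<le> \<bar>as + a\<bar>"
proof -
  obtain m where "m > 0" "\<forall>a\<in>J. m \<le> dist (- as) a"
    using separate_point_closed[OF compact_imp_closed[OF assms(1)] assms(2)] by blast
  then show ?thesis
    by (intro that[of m]) (auto simp: dist_real_def abs_minus_commute)
qed

lemma right_rescaled_bounded_below_near_0:
  assumes "compact J" "- as \<notin> J"
  obtains \<delta> c where "\<delta> > 0" "c > 0"
    "\<And>t a w x. t \<in> {0..1} \<Longrightarrow> t < \<delta> \<Longrightarrow> a \<in> J \<Longrightarrow> norm w = 1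
       \<Longrightarrow> c * norm x \<le> norm (right_rescaled p1 p2 p3 q3 p4 q4 (as + a) t w *v x)"
proof -
  obtain m where m: "m > 0" "\<And>a. a \<in> J \<Longrightarrow> m \<le> \<bar>as + a\<bar>"
    using compact_bounded_away_from_point[OF assms] by blast
  define \<mu> where "\<mu> = min 1 (4 * m)"
  define K where "K z = right_rescaled p1 p2 p3 q3 p4 q4 (as + fst (snd z)) (fst z) (snd (snd z))"
    for z :: "real \<times> real \<times> complex"
  have cont: "continuous_on ({0..1} \<times> (J \<times> sphere 0 1)) K"
    unfolding K_def using m by (intro continuous_on_right_rescaled continuous_intros) force
  have at_0: "\<mu> * norm x \<le> norm (K (0, s) *v x)" if "s \<in> J \<times> sphere 0 1" for s x
  proof -
    have "\<mu> \<le> min 1 (4 * \<bar>as + fst s\<bar>)"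
      using m(2)[of "fst s"] that by (auto simp: \<mu>_def min_le_iff_disj)
    then have "\<mu> * norm x \<le> min 1 (4 * \<bar>as + fst s\<bar>) * norm x"
      by (rule mult_right_mono) simp
    also have "\<dots> \<le> norm (K (0, s) *v x)"
      using right_rescaled_at_0_bounded_below[of "snd s" "as + fst s" x] that by (auto simp: K_def)
    finally show ?thesis .
  qed
  have "\<mu> > 0" using m(1) by (simp add: \<mu>_def)
  have "compact (J \<times> sphere (0::complex) 1)"
    using assms(1) by (intro compact_Times compact_sphere)
  then obtain \<delta> where "\<delta> > 0"
    "\<And>t s x. t \<in> {0..1} \<Longrightarrow> t < \<delta> \<Longrightarrow> s \<in> J \<times> sphere 0 1 \<Longrightarrow> \<mu> / 2 * norm x \<le> norm (K (t, s) *v x)"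
    using bounded_below_persists_near_0[OF _ cont \<open>\<mu> > 0\<close> at_0] by blast
  then show ?thesis
    using \<open>\<mu> > 0\<close> by (intro that[of \<delta> "\<mu> / 2"]) (auto simp: K_def)
qed

lemma weighted_axis:
  "l \<in> {3, 4} \<Longrightarrow> (\<chi> r. weight34 s r * axis l 1 $ r) = s *\<^sub>R axis l (1::real)"
  by (auto simp: vec_eq_iff weight34_def axis_def)

lemma add_neq_0_if_uminus_notin: "- as \<notin> J \<Longrightarrow> a \<in> J \<Longrightarrow> as + a \<noteq> (0::real)"
  by (metis add_eq_0_iff)

lemma admissible_right_det_neq_0:
  "admissible_right as J FR \<Longrightarrow> y \<in> {0..<1} \<Longrightarrow> a \<in> J \<Longrightarrow> det (FR y a) \<noteq> 0"
  unfolding admissible_right_def by blast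

lemma admissible_right_rescaled:
  assumes "admissible_right as J FR" "- as \<notin> J"
  obtains p1 p2 p3 q3 p4 q4 where "\<And>y a r c. y \<in> {0..<1} \<Longrightarrow> a \<in> J \<Longrightarrow>
    FR y a $ r $ c * weight34 ((1 - y)\<^sup>2) r
      = right_rescaled p1 p2 p3 q3 p4 q4 (as + a) (1 - y) (exp (\<i> * of_real (phi y (as + a)))) $ r $ c"
proof -
  obtain p1 p2 p3 q3 p4 q4 where FR: "\<And>y a. y \<in> {0..<1} \<Longrightarrow> a \<in> J \<Longrightarrow>
      FR y a = fund_mat (fR1 p1 (as + a)) (fR2 p2 (as + a)) (fR3 p3 q3 (as + a)) (fR4 p4 q4 (as + a)) y"
    using assms(1) unfolding admissible_right_def by blast
  show ?thesis
    using FR fund_mat_right_rescaled add_neq_0_if_uminus_notin[OF assms(2)]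
    by (intro that[of p1 p2 p3 q3 p4 q4]) auto
qed

lemma admissible_right_continuous:
  assumes "admissible_right as J FR" "- as \<notin> J"
  shows "continuous_on ({0..<1} \<times> J) (\<lambda>z. FR (fst z) (snd z))"
proof -
  obtain p1 p2 p3 q3 p4 q4 where FR: "\<And>y a r c. y \<in> {0..<1} \<Longrightarrow> a \<in> J \<Longrightarrow>
    FR y a $ r $ c * weight34 ((1 - y)\<^sup>2) r
      = right_rescaled p1 p2 p3 q3 p4 q4 (as + a) (1 - y) (exp (\<i> * of_real (phi y (as + a)))) $ r $ c"
    using admissible_right_rescaled[OF assms] by blast
  show ?thesis
  proof (rule continuous_on_unweight)
    show "continuous_on ({0..<1} \<times> J) (\<lambda>z. right_rescaled p1 p2 p3 q3 p4 q4 (as + snd z) (1 - fst z)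
        (exp (\<i> * of_real (phi (fst z) (as + snd z)))))"
      using add_neq_0_if_uminus_notin[OF assms(2)]
      by (intro continuous_on_right_rescaled continuous_intros) auto
    show "continuous_on ({0..<1} \<times> J) (\<lambda>z. weight34 ((1 - fst z)\<^sup>2) r)" for r
      by (intro continuous_intros)
    show "weight34 ((1 - fst z)\<^sup>2) r \<noteq> 0" if "z \<in> {0..<1} \<times> J" for z r
      using that by (intro weight34_neq_0) auto
    show "FR (fst z) (snd z) $ r $ c * weight34 ((1 - fst z)\<^sup>2) r
        = right_rescaled p1 p2 p3 q3 p4 q4 (as + snd z) (1 - fst z)
            (exp (\<i> * of_real (phi (fst z) (as + snd z)))) $ r $ c"
      if "z \<in> {0..<1} \<times> J" for z r c
      using that FR[of "fst z" "snd z"] by auto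
  qed
qed

text \<open>Near \<open>y = 1\<close> the bound comes from the endpoint \<open>t = 0\<close> of the rescaled matrix, uniformly in
  the phase \<open>w\<close>; on the rest of \<open>[0, 1)\<close> it comes from compactness and \<open>det F\<^sub>R \<noteq> 0\<close>.\<close>

lemma admissible_right_weighted_bounded_below:
  assumes "admissible_right as J FR" "compact J" "- as \<notin> J"
  obtains c where "c > 0" "\<And>y a x. y \<in> {0..<1} \<Longrightarrow> a \<in> J
      \<Longrightarrow> c * norm x \<le> norm (\<chi> r. weight34 ((1 - y)\<^sup>2) r * (FR y a *v x) $ r)"
proof -
  obtain p1 p2 p3 q3 p4 q4 where FR: "\<And>y a r c. y \<in> {0..<1} \<Longrightarrow> a \<in> J \<Longrightarrow>
    FR y a $ r $ c * weight34 ((1 - y)\<^sup>2) r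
      = right_rescaled p1 p2 p3 q3 p4 q4 (as + a) (1 - y) (exp (\<i> * of_real (phi y (as + a)))) $ r $ c"
    using admissible_right_rescaled[OF assms(1,3)] by blast
  define K where "K z = right_rescaled p1 p2 p3 q3 p4 q4 (as + snd z) (1 - fst z)
      (exp (\<i> * of_real (phi (fst z) (as + snd z))))" for z :: "real \<times> real"
  have weighted: "(\<chi> r. weight34 ((1 - y)\<^sup>2) r * (FR y a *v x) $ r) = K (y, a) *v x"
    if "y \<in> {0..<1}" "a \<in> J" for y a x
    using weighted_matrix_vector_mult[of "FR y a" "weight34 ((1 - y)\<^sup>2)" "\<lambda>_. 1" "K (y, a)" x]
      FR[OF that] by (simp add: K_def)
  obtain \<delta> c1 where \<delta>: "\<delta> > 0" "c1 > 0"
    "\<And>t a w x. t \<in> {0..1} \<Longrightarrow> t < \<delta> \<Longrightarrow> a \<in> J \<Longrightarrow> norm w = 1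
       \<Longrightarrow> c1 * norm x \<le> norm (right_rescaled p1 p2 p3 q3 p4 q4 (as + a) t w *v x)"
    using right_rescaled_bounded_below_near_0[OF assms(2,3)] by blast
  have cont: "continuous_on ({0..1 - \<delta>} \<times> J) K"
    unfolding K_def using \<delta>(1) add_neq_0_if_uminus_notin[OF assms(3)]
    by (intro continuous_on_right_rescaled continuous_intros) auto
  have inj: "x = 0" if zJ: "z \<in> {0..1 - \<delta>} \<times> J" and Kx: "K z *v x = 0" for z and x :: "real^4"
  proof -
    obtain y a where z: "z = (y, a)" "y \<in> {0..<1}" "a \<in> J"
      using zJ \<delta>(1) by (cases z) auto
    have "FR y a *v x = 0"
      using Kx weighted[OF z(2,3), of x] weight34_neq_0[of "(1 - y)\<^sup>2"] z by (simp add: vec_eq_iff)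
    then show ?thesis
      using admissible_right_det_neq_0[OF assms(1) z(2,3)] matrix_vector_mult_eq_0_imp_eq_0 by blast
  qed
  have "\<exists>c>0. \<forall>z\<in>{0..1 - \<delta>} \<times> J. \<forall>x. c * norm x \<le> norm (K z *v x)"
    by (rule compact_injective_matrices_bounded_below[OF compact_Times[OF compact_Icc assms(2)] cont])
       (rule inj)
  then obtain c2 where c2: "c2 > 0" "\<And>z x. z \<in> {0..1 - \<delta>} \<times> J \<Longrightarrow> c2 * norm x \<le> norm (K z *v x)"
    by blast
  have "min c1 c2 * norm x \<le> norm (K (y, a) *v x)" if "y \<in> {0..<1}" "a \<in> J" for y a x
  proof -
    have "c1 * norm x \<le> norm (K (y, a) *v x) \<or> c2 * norm x \<le> norm (K (y, a) *v x)"
      using \<delta>(3)[of "1 - y" a "exp (\<i> * of_real (phi y (as + a)))" x] c2(2)[of "(y, a)" x] that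
      by (cases "1 - y < \<delta>") (auto simp: K_def)
    then show ?thesis
      by (meson min.cobounded1 min.cobounded2 mult_right_mono norm_ge_zero order_trans)
  qed
  then show ?thesis
    using \<delta>(2) c2(1) weighted by (intro that[of "min c1 c2"]) auto
qed

lemma admissible_right_inverse_column_bound:
  assumes "admissible_right as J FR" "compact J" "- as \<notin> J"
  obtains C where "\<And>y a l. y \<in> {0..<1} \<Longrightarrow> a \<in> J \<Longrightarrow> l \<in> {3, 4}
      \<Longrightarrow> norm (matrix_inv (FR y a) *v axis l 1) \<le> C * (1 - y)\<^sup>2"
proof -
  obtain c where c: "c > 0" "\<And>y a x. y \<in> {0..<1} \<Longrightarrow> a \<in> J
      \<Longrightarrow> c * norm x \<le> norm (\<chi> r. weight34 ((1 - y)\<^sup>2) r * (FR y a *v x) $ r)"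
    using admissible_right_weighted_bounded_below[OF assms] by blast
  show ?thesis
  proof (rule that[of "1 / c"])
    fix y a :: real and l :: 4
    assume ya: "y \<in> {0..<1}" "a \<in> J" and l: "l \<in> {3, 4}"
    define x where "x = matrix_inv (FR y a) *v axis l 1"
    have "FR y a *v x = axis l 1"
      unfolding x_def by (rule matrix_vector_mul_matrix_inv[OF admissible_right_det_neq_0[OF assms(1) ya]])
    then have "c * norm x \<le> (1 - y)\<^sup>2"
      using c(2)[OF ya, of x] weighted_axis[OF l] ya(1) by simp
    then show "norm x \<le> 1 / c * (1 - y)\<^sup>2"
      using c(1) by (simp add: field_simps)
  qed
qed

lemma admissible_left_det_neq_0: "admissible_left FL \<Longrightarrow> y \<in> {-1<..0} \<Longrightarrow> det (FL y) \<noteq> 0"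
  unfolding admissible_left_def by blast

lemma admissible_left_rescaled:
  assumes "admissible_left FL"
  obtains l1 l2 l3 l4 where "\<And>y r c. y \<in> {-1<..0} \<Longrightarrow>
    FL y $ r $ c * (weight34 (1 + y) r * weight34 (1 + y) c) = left_rescaled l1 l2 l3 l4 y $ r $ c"
proof -
  obtain l1 l2 l3 l4 where FL: "\<And>y. y \<in> {-1<..0} \<Longrightarrow> FL y = fund_mat (gL1 l1) (gL2 l2) (gL3 l3) (gL4 l4) y"
    using assms unfolding admissible_left_def by blast
  show ?thesis
    using FL fund_mat_left_rescaled by (intro that[of l1 l2 l3 l4]) (auto simp: mult.assoc)
qed

lemma admissible_left_continuous:
  assumes "admissible_left FL"
  shows "continuous_on {-1<..0} FL"
proof -
  obtain l1 l2 l3 l4 where FL: "\<And>y r c. y \<in> {-1<..0} \<Longrightarrow>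
    FL y $ r $ c * (weight34 (1 + y) r * weight34 (1 + y) c) = left_rescaled l1 l2 l3 l4 y $ r $ c"
    using admissible_left_rescaled[OF assms] by blast
  show ?thesis
  proof (rule continuous_on_unweight[OF continuous_on_left_rescaled])
    show "continuous_on {-1<..0} (\<lambda>y. weight34 (1 + y) r * weight34 (1 + y) c)" for r c
      by (intro continuous_intros)
    show "weight34 (1 + y) r * weight34 (1 + y) c \<noteq> 0" if "y \<in> {-1<..0}" for y r c
      using that weight34_neq_0[of "1 + y"] by simp
  qed (rule FL)
qed

lemma admissible_left_weighted_bounded_below:
  assumes "admissible_left FL"
  obtains c where "c > 0" "\<And>y u. y \<in> {-1<..0}
      \<Longrightarrow> c * norm u \<le> norm (\<chi> r. weight34 (1 + y) r * (FL y *v (\<chi> j. weight34 (1 + y) j * u $ j)) $ r)"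
proof -
  obtain l1 l2 l3 l4 where FL: "\<And>y r c. y \<in> {-1<..0} \<Longrightarrow>
    FL y $ r $ c * (weight34 (1 + y) r * weight34 (1 + y) c) = left_rescaled l1 l2 l3 l4 y $ r $ c"
    using admissible_left_rescaled[OF assms] by blast
  have weighted: "left_rescaled l1 l2 l3 l4 y *v u
      = (\<chi> r. weight34 (1 + y) r * (FL y *v (\<chi> j. weight34 (1 + y) j * u $ j)) $ r)"
    if "y \<in> {-1<..0}" for y u
    using FL[OF that] by (intro weighted_matrix_vector_mult) (simp add: mult.assoc)
  have inj: "u = 0" if y: "y \<in> {-1..0}" and Hu: "left_rescaled l1 l2 l3 l4 y *v u = 0" for y u
  proof (cases "y = -1")
    case True
    then show ?thesis using Hu left_rescaled_at_minus_1_injective by blast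
  next
    case False
    with y have y': "y \<in> {-1<..0}" by auto
    have "(FL y *v (\<chi> j. weight34 (1 + y) j * u $ j)) $ r = 0" for r
      using Hu weighted[OF y', of u] weight34_neq_0[of "1 + y" r] y' by (simp add: vec_eq_iff) blast
    then have "FL y *v (\<chi> j. weight34 (1 + y) j * u $ j) = 0"
      by (simp add: vec_eq_iff)
    then have "(\<chi> j. weight34 (1 + y) j * u $ j) = 0"
      by (rule matrix_vector_mult_eq_0_imp_eq_0[OF admissible_left_det_neq_0[OF assms y']])
    then show ?thesis
      using weight34_neq_0[of "1 + y"] y' by (simp add: vec_eq_iff)
  qed
  have "\<exists>c>0. \<forall>y\<in>{-1..0}. \<forall>u. c * norm u \<le> norm (left_rescaled l1 l2 l3 l4 y *v u)"
    by (rule compact_injective_matrices_bounded_below[OF compact_Icc continuous_on_left_rescaled])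
       (rule inj)
  then obtain c where c: "c > 0"
      "\<And>y u. y \<in> {-1..0} \<Longrightarrow> c * norm u \<le> norm (left_rescaled l1 l2 l3 l4 y *v u)"
    by blast
  show ?thesis
  proof (rule that[OF c(1)])
    fix y :: real and u :: "real^4"
    assume y: "y \<in> {-1<..0}"
    then show "c * norm u
        \<le> norm (\<chi> r. weight34 (1 + y) r * (FL y *v (\<chi> j. weight34 (1 + y) j * u $ j)) $ r)"
      using c(2)[of y u] weighted[OF y, of u] by simp
  qed
qed

lemma admissible_left_inverse_column_bound:
  assumes "admissible_left FL"
  obtains C where "\<And>y l. y \<in> {-1<..0} \<Longrightarrow> l \<in> {3, 4}
      \<Longrightarrow> norm (matrix_inv (FL y) *v axis l 1) \<le> C * (1 + y)"
proof -
  obtain c where c: "c > 0" "\<And>y u. y \<in> {-1<..0}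
      \<Longrightarrow> c * norm u \<le> norm (\<chi> r. weight34 (1 + y) r * (FL y *v (\<chi> j. weight34 (1 + y) j * u $ j)) $ r)"
    using admissible_left_weighted_bounded_below[OF assms] by blast
  show ?thesis
  proof (rule that[of "1 / c"])
    fix y :: real and l :: 4
    assume y: "y \<in> {-1<..0}" and l: "l \<in> {3, 4}"
    define x where "x = matrix_inv (FL y) *v axis l 1"
    define u where "u = (\<chi> j. x $ j / weight34 (1 + y) j)"
    have x: "(\<chi> j. weight34 (1 + y) j * u $ j) = x"
      using weight34_neq_0[of "1 + y"] y by (simp add: u_def vec_eq_iff)
    have "FL y *v x = axis l 1"
      unfolding x_def by (rule matrix_vector_mul_matrix_inv[OF admissible_left_det_neq_0[OF assms y]])
    then have "c * norm u \<le> 1 + y"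
      using c(2)[OF y, of u] weighted_axis[OF l] y by (simp add: x)
    moreover have "norm x \<le> norm u"
      unfolding x[symmetric] using y
      by (intro norm_le_componentwise_cart) (simp add: abs_mult weight34_def mult_left_le_one_le)
    ultimately have "c * norm x \<le> 1 + y"
      using c(1) by (meson mult_left_mono order_trans less_imp_le)
    then show "norm x \<le> 1 / c * (1 + y)"
      using c(1) by (simp add: field_simps)
  qed
qed

definition psi_coeff :: "(real \<Rightarrow> real^4^4) \<Rightarrow> (real \<Rightarrow> real \<Rightarrow> real^4^4) \<Rightarrow> real \<Rightarrow> 4 \<Rightarrow> real" where
  "psi_coeff FL FR a k =
     MF FL FR a $ 4 $ 1 * (MF FL FR a $ 3 $ k / MF FL FR a $ 3 $ 1) - MF FL FR a $ 4 $ k"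

lemma psiF_eq: "psiF FL FR a g =
    psi_coeff FL FR a 3 * integral {-1..1} (alphaF FL FR a g 3)
  + psi_coeff FL FR a 4 * integral {-1..1} (alphaF FL FR a g 4)"
  by (simp add: psiF_def psi_coeff_def)

locale admissible_fundamental =
  fixes as :: real and J :: "real set"
    and FL :: "real \<Rightarrow> real^4^4" and FR :: "real \<Rightarrow> real \<Rightarrow> real^4^4"
  assumes admissible: "admissible_fund as J FL FR"
    and compact: "compact J"
    and away: "- as \<notin> J"
begin

lemma admissible_right_FR: "admissible_right as J FR"
  and admissible_left_FL: "admissible_left FL"
  and MF_3_1_neq_0: "a \<in> J \<Longrightarrow> MF FL FR a $ 3 $ 1 \<noteq> 0"
  using admissible unfolding admissible_fund_def by auto

lemma MF_continuous: "continuous_on J (MF FL FR)"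
proof -
  have "continuous_on J (\<lambda>a. (0::real, a))" "(\<lambda>a. (0::real, a)) ` J \<subseteq> {0..<1} \<times> J"
    by (auto intro!: continuous_intros)
  from continuous_on_compose2[OF admissible_right_continuous[OF admissible_right_FR away] this]
  have "continuous_on J (\<lambda>a. FR 0 a)"
    by simp
  then show ?thesis
    unfolding MF_def[abs_def] by (intro continuous_intros)
qed

lemma MF_det_neq_0: "a \<in> J \<Longrightarrow> det (MF FL FR a) \<noteq> 0"
  unfolding MF_def det_mul
  using det_matrix_inv_neq_0[OF admissible_left_det_neq_0[OF admissible_left_FL, of 0]]
    admissible_right_det_neq_0[OF admissible_right_FR, of 0]
  by auto

lemma left_branch_inverse_column_bound:
  obtains C where "C \<ge> 0" "\<And>y a l. y \<in> {-1<..0} \<Longrightarrow> a \<in> J \<Longrightarrow> l \<in> {3, 4}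
    \<Longrightarrow> norm (matrix_inv (FL y ** MF FL FR a) *v axis l 1) \<le> C * (1 + y)"
proof -
  obtain CL where CL: "\<And>y l. y \<in> {-1<..0} \<Longrightarrow> l \<in> {3, 4}
      \<Longrightarrow> norm (matrix_inv (FL y) *v axis l 1) \<le> CL * (1 + y)"
    using admissible_left_inverse_column_bound[OF admissible_left_FL] by blast
  have "\<exists>c>0. \<forall>a\<in>J. \<forall>x. c * norm x \<le> norm (MF FL FR a *v x)"
    by (rule compact_injective_matrices_bounded_below[OF compact MF_continuous])
       (rule matrix_vector_mult_eq_0_imp_eq_0[OF MF_det_neq_0])
  then obtain cM where cM: "cM > 0" "\<And>a x. a \<in> J \<Longrightarrow> cM * norm x \<le> norm (MF FL FR a *v x)"
    by blast
  show ?thesis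
  proof (rule that[of "\<bar>CL\<bar> / cM"])
    show "\<bar>CL\<bar> / cM \<ge> 0" using cM(1) by simp
    fix y a :: real and l :: 4
    assume y: "y \<in> {-1<..0}" and a: "a \<in> J" and l: "l \<in> {3, 4}"
    have "norm (matrix_inv (FL y ** MF FL FR a) *v axis l 1) \<le> norm (matrix_inv (FL y) *v axis l 1) / cM"
      by (rule norm_matrix_inv_mult_le[OF admissible_left_det_neq_0[OF admissible_left_FL y]
            MF_det_neq_0[OF a] cM(1) cM(2)[OF a]])
    also have "\<dots> \<le> \<bar>CL\<bar> * (1 + y) / cM"
      using CL[OF y l] y cM(1) by (intro divide_right_mono) (auto intro: order_trans mult_right_mono)
    finally show "norm (matrix_inv (FL y ** MF FL FR a) *v axis l 1) \<le> \<bar>CL\<bar> / cM * (1 + y)"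
      by simp
  qed
qed

lemma Ffund_inverse_bound:
  obtains C where "C \<ge> 0" "\<And>y a k l. y \<in> {-1<..<1} \<Longrightarrow> a \<in> J \<Longrightarrow> l \<in> {3, 4}
    \<Longrightarrow> \<bar>matrix_inv (Ffund FL FR y a) $ k $ l\<bar> \<le> C * ((1 + y) * (1 - y)\<^sup>2)"
proof -
  obtain CR where CR: "\<And>y a l. y \<in> {0..<1} \<Longrightarrow> a \<in> J \<Longrightarrow> l \<in> {3, 4}
      \<Longrightarrow> norm (matrix_inv (FR y a) *v axis l 1) \<le> CR * (1 - y)\<^sup>2"
    using admissible_right_inverse_column_bound[OF admissible_right_FR compact away] by blast
  obtain CL where CL: "CL \<ge> 0" "\<And>y a l. y \<in> {-1<..0} \<Longrightarrow> a \<in> J \<Longrightarrow> l \<in> {3, 4}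
      \<Longrightarrow> norm (matrix_inv (FL y ** MF FL FR a) *v axis l 1) \<le> CL * (1 + y)"
    using left_branch_inverse_column_bound by blast
  define C where "C = \<bar>CR\<bar> + CL"
  have C: "C \<ge> 0" "CR \<le> C" "CL \<le> C"
    using CL(1) by (auto simp: C_def)
  show ?thesis
  proof (rule that[OF C(1)])
    fix y a :: real and k l :: 4
    assume y: "y \<in> {-1<..<1}" and a: "a \<in> J" and l: "l \<in> {3, 4}"
    have "norm (matrix_inv (Ffund FL FR y a) *v axis l 1) \<le> C * ((1 + y) * (1 - y)\<^sup>2)"
    proof (cases "y \<le> 0")
      case True
      have "1 * (C * (1 + y)) \<le> (1 - y)\<^sup>2 * (C * (1 + y))"
        using True y C(1) by (intro mult_right_mono) (auto simp: one_le_power)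
      moreover have "CL * (1 + y) \<le> C * (1 + y)"
        using True y C(3) by (intro mult_right_mono) auto
      ultimately show ?thesis
        using CL(2)[of y a l] True y a l by (simp add: Ffund_def algebra_simps)
    next
      case False
      then have "norm (matrix_inv (Ffund FL FR y a) *v axis l 1) \<le> CR * (1 - y)\<^sup>2"
        using CR[of y a l] y a l by (simp add: Ffund_def)
      also have "\<dots> \<le> C * (1 - y)\<^sup>2"
        using C(2) by (intro mult_right_mono) auto
      also have "\<dots> \<le> C * ((1 + y) * (1 - y)\<^sup>2)"
        using False C(1) by (intro mult_left_mono) (auto simp: mult_le_cancel_right1)
      finally show ?thesis .
    qed
    then show "\<bar>matrix_inv (Ffund FL FR y a) $ k $ l\<bar> \<le> C * ((1 + y) * (1 - y)\<^sup>2)"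
      using component_le_norm_cart[of "matrix_inv (Ffund FL FR y a) *v axis l 1" k]
      by (simp add: matrix_inv_column_nth)
  qed
qed

lemma alphaF_bound:
  obtains B where "B \<ge> 0"
    "\<And>g a k y. inY g \<Longrightarrow> a \<in> J \<Longrightarrow> y \<in> {-1<..<1} \<Longrightarrow> \<bar>alphaF FL FR a g k y\<bar> \<le> B * Ynorm g"
proof -
  obtain C where C: "C \<ge> 0" "\<And>y a k l. y \<in> {-1<..<1} \<Longrightarrow> a \<in> J \<Longrightarrow> l \<in> {3, 4}
      \<Longrightarrow> \<bar>matrix_inv (Ffund FL FR y a) $ k $ l\<bar> \<le> C * ((1 + y) * (1 - y)\<^sup>2)"
    using Ffund_inverse_bound by blast
  show ?thesis
  proof (rule that[of "2 * C"])
    show "2 * C \<ge> 0" using C(1) by simp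
    fix g and a y :: real and k :: 4
    assume g: "inY g" and a: "a \<in> J" and y: "y \<in> {-1<..<1}"
    let ?F = "matrix_inv (Ffund FL FR y a)" and ?w = "(1 + y) * (1 - y)\<^sup>2"
    have "\<bar>alphaF FL FR a g k y\<bar> \<le> \<bar>?F $ k $ 3\<bar> * \<bar>Re (g y)\<bar> + \<bar>?F $ k $ 4\<bar> * \<bar>Im (g y)\<bar>"
      unfolding alphaF_def abs_mult[symmetric] by (rule abs_triangle_ineq)
    also have "\<dots> \<le> C * ?w * cmod (g y) + C * ?w * cmod (g y)"
      using C(2)[OF y a, of _ k] y C(1)
      by (intro add_mono mult_mono abs_Re_le_cmod abs_Im_le_cmod) auto
    also have "\<dots> = 2 * C * (?w * cmod (g y))"
      by simp
    also have "\<dots> \<le> 2 * C * Ynorm g"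
      using inY_weighted_le_Ynorm[OF g y] C(1) by (intro mult_left_mono) auto
    finally show "\<bar>alphaF FL FR a g k y\<bar> \<le> 2 * C * Ynorm g" .
  qed
qed

lemma matrix_inv_Ffund_continuous:
  assumes "I \<subseteq> {-1<..<0} \<or> I \<subseteq> {0<..<1}"
  shows "continuous_on (I \<times> J) (\<lambda>z. matrix_inv (Ffund FL FR (fst z) (snd z)) $ k $ l)"
  using assms
proof
  assume I: "I \<subseteq> {-1<..<0}"
  have "continuous_on (I \<times> J) (\<lambda>z. matrix_inv (FL (fst z) ** MF FL FR (snd z)) $ k $ l)"
  proof (rule continuous_on_matrix_inv_nth)
    show "continuous_on (I \<times> J) (\<lambda>z. FL (fst z) ** MF FL FR (snd z))"
      using I by (intro continuous_intros continuous_on_compose2[OF admissible_left_continuous[OF admissible_left_FL]]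
          continuous_on_compose2[OF MF_continuous]) auto
    show "det (FL (fst z) ** MF FL FR (snd z)) \<noteq> 0" if "z \<in> I \<times> J" for z
      using that I admissible_left_det_neq_0[OF admissible_left_FL, of "fst z"] MF_det_neq_0[of "snd z"]
      by (auto simp: det_mul)
  qed
  then show ?thesis
    by (rule continuous_on_cong[THEN iffD1, rotated 2]) (use I in \<open>auto simp: Ffund_def\<close>)
next
  assume I: "I \<subseteq> {0<..<1}"
  have "continuous_on (I \<times> J) (\<lambda>z. matrix_inv (FR (fst z) (snd z)) $ k $ l)"
  proof (rule continuous_on_matrix_inv_nth)
    show "continuous_on (I \<times> J) (\<lambda>z. FR (fst z) (snd z))"
      by (rule continuous_on_subset[OF admissible_right_continuous[OF admissible_right_FR away]])
         (use I in auto)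
    show "det (FR (fst z) (snd z)) \<noteq> 0" if "z \<in> I \<times> J" for z
      using that I admissible_right_det_neq_0[OF admissible_right_FR] by auto
  qed
  then show ?thesis
    by (rule continuous_on_cong[THEN iffD1, rotated 2]) (use I in \<open>auto simp: Ffund_def\<close>)
qed

lemma alphaF_continuous_in_y:
  assumes "inY g" "a \<in> J"
  shows "continuous_on ({-1<..<1} - {0}) (alphaF FL FR a g k)"
proof -
  have "continuous_on I (alphaF FL FR a g k)" if "I = {-1<..<0} \<or> I = {0<..<1}" for I
  proof -
    have pair: "continuous_on I (\<lambda>y. (y, a))" "(\<lambda>y. (y, a)) ` I \<subseteq> I \<times> J"
      using assms(2) by (auto intro!: continuous_intros)
    have "I \<subseteq> {-1<..<0} \<or> I \<subseteq> {0<..<1}"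
      using that by auto
    from continuous_on_compose2[OF matrix_inv_Ffund_continuous[OF this] pair]
    have entries: "continuous_on I (\<lambda>y. matrix_inv (Ffund FL FR y a) $ k $ l)" for l
      by simp
    have "continuous_on I g"
      using assms(1) that unfolding inY_def by (auto elim: continuous_on_subset)
    then show ?thesis
      unfolding alphaF_def by (intro continuous_intros entries)
  qed
  moreover have "{-1<..<1} - {0} = {-1<..<0} \<union> {0<..<(1::real)}"
    by auto
  ultimately show ?thesis
    by (metis continuous_on_open_Un open_greaterThanLessThan)
qed

lemma alphaF_continuous_in_a:
  assumes "y \<in> {-1<..<1} - {0}"
  shows "continuous_on J (\<lambda>a. alphaF FL FR a g k y)"
proof -
  have pair: "continuous_on J (\<lambda>a. (y, a))" "(\<lambda>a. (y, a)) ` J \<subseteq> {y} \<times> J"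
    by (auto intro!: continuous_intros)
  have "{y} \<subseteq> {-1<..<0} \<or> {y} \<subseteq> {0<..<1}"
    using assms by auto
  from continuous_on_compose2[OF matrix_inv_Ffund_continuous[OF this] pair]
  have entries: "continuous_on J (\<lambda>a. matrix_inv (Ffund FL FR y a) $ k $ l)" for l
    by simp
  then show ?thesis
    unfolding alphaF_def by (intro continuous_intros entries)
qed

lemma integrable_alphaF:
  assumes "inY g" "a \<in> J"
  shows "alphaF FL FR a g k integrable_on {-1..1}"
proof -
  obtain B where "\<And>y. y \<in> {-1<..<1} \<Longrightarrow> \<bar>alphaF FL FR a g k y\<bar> \<le> B * Ynorm g"
    using alphaF_bound assms by metis
  then show ?thesis
    by (intro bounded_continuous_integrable_off_finite(1)[OF alphaF_continuous_in_y[OF assms]]) auto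
qed

lemma integral_alphaF_bound:
  obtains B where "B \<ge> 0" "\<And>g a k. inY g \<Longrightarrow> a \<in> J
    \<Longrightarrow> \<bar>integral {-1..1} (alphaF FL FR a g k)\<bar> \<le> B * Ynorm g"
proof -
  obtain B where B: "B \<ge> 0"
    "\<And>g a k y. inY g \<Longrightarrow> a \<in> J \<Longrightarrow> y \<in> {-1<..<1} \<Longrightarrow> \<bar>alphaF FL FR a g k y\<bar> \<le> B * Ynorm g"
    using alphaF_bound by blast
  show ?thesis
  proof (rule that[of "2 * B"])
    show "2 * B \<ge> 0" using B(1) by simp
    show "\<bar>integral {-1..1} (alphaF FL FR a g k)\<bar> \<le> 2 * B * Ynorm g" if "inY g" "a \<in> J" for g a k
    proof -
      have "\<bar>integral {-1..1} (alphaF FL FR a g k)\<bar> \<le> (1 - -1) * (B * Ynorm g)"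
        by (rule bounded_continuous_integrable_off_finite(2)[OF alphaF_continuous_in_y[OF that]])
           (use B(2)[OF that] in auto)
      then show ?thesis by simp
    qed
  qed
qed

lemma continuous_on_integral_alphaF:
  assumes "inY g"
  shows "continuous_on J (\<lambda>a. integral {-1..1} (alphaF FL FR a g k))"
proof -
  obtain B where "\<And>a y. a \<in> J \<Longrightarrow> y \<in> {-1<..<1} \<Longrightarrow> \<bar>alphaF FL FR a g k y\<bar> \<le> B * Ynorm g"
    using alphaF_bound assms by metis
  then show ?thesis
    by (intro continuous_on_parametric_integral[where E = "{0}"] alphaF_continuous_in_a)
       (auto intro: alphaF_continuous_in_y[OF assms])
qed

lemma psi_coeff_continuous: "continuous_on J (\<lambda>a. psi_coeff FL FR a k)"
  unfolding psi_coeff_def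
  by (intro continuous_intros continuous_on_component MF_continuous) (use MF_3_1_neq_0 in auto)

lemma psi_coeff_bounded:
  obtains D where "\<And>a. a \<in> J \<Longrightarrow> \<bar>psi_coeff FL FR a k\<bar> \<le> D"
proof -
  have "bounded ((\<lambda>a. psi_coeff FL FR a k) ` J)"
    by (intro compact_imp_bounded compact_continuous_image psi_coeff_continuous compact)
  then show ?thesis
    using that unfolding bounded_iff by auto
qed

lemma psiF_bound: "\<exists>C>0. \<forall>g a. inY g \<longrightarrow> a \<in> J \<longrightarrow> \<bar>psiF FL FR a g\<bar> \<le> C * Ynorm g"
proof -
  obtain B where B: "B \<ge> 0" "\<And>g a k. inY g \<Longrightarrow> a \<in> J
      \<Longrightarrow> \<bar>integral {-1..1} (alphaF FL FR a g k)\<bar> \<le> B * Ynorm g"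
    using integral_alphaF_bound by blast
  obtain D3 D4 where D: "\<And>a. a \<in> J \<Longrightarrow> \<bar>psi_coeff FL FR a 3\<bar> \<le> D3"
      "\<And>a. a \<in> J \<Longrightarrow> \<bar>psi_coeff FL FR a 4\<bar> \<le> D4"
    using psi_coeff_bounded by metis
  define C where "C = (\<bar>D3\<bar> + \<bar>D4\<bar>) * B + 1"
  have "C > 0"
    using B(1) by (simp add: C_def add_nonneg_pos)
  moreover have "\<bar>psiF FL FR a g\<bar> \<le> C * Ynorm g" if g: "inY g" and a: "a \<in> J" for g a
  proof -
    let ?I = "\<lambda>k. integral {-1..1} (alphaF FL FR a g k)"
    have "\<bar>psiF FL FR a g\<bar> \<le> \<bar>psi_coeff FL FR a 3\<bar> * \<bar>?I 3\<bar> + \<bar>psi_coeff FL FR a 4\<bar> * \<bar>?I 4\<bar>"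
      unfolding psiF_eq abs_mult[symmetric] by (rule abs_triangle_ineq)
    also have "\<dots> \<le> \<bar>D3\<bar> * (B * Ynorm g) + \<bar>D4\<bar> * (B * Ynorm g)"
      using D[OF a] B(2)[OF g a] by (intro add_mono mult_mono) auto
    also have "\<dots> \<le> C * Ynorm g"
      using Ynorm_nonneg[OF g] by (simp add: C_def algebra_simps)
    finally show ?thesis .
  qed
  ultimately show ?thesis by blast
qed

lemma psiF_continuous: "inY g \<Longrightarrow> continuous_on J (\<lambda>a. psiF FL FR a g)"
  unfolding psiF_eq by (intro continuous_intros psi_coeff_continuous continuous_on_integral_alphaF)

end

theorem lemma3p29:
  fixes as :: real and J :: "real set"
    and FL :: "real \<Rightarrow> real^4^4" and FR :: "real \<Rightarrow> real \<Rightarrow> real^4^4"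
  assumes "as \<noteq> 0" and "compact J" and "- as \<notin> J"
    and "admissible_fund as J FL FR"
  shows "(\<forall>g a k. inY g \<longrightarrow> a \<in> J \<longrightarrow> k \<in> {3, 4} \<longrightarrow>
              alphaF FL FR a g k integrable_on {-1..1})
       \<and> (\<exists>C>0. \<forall>g a. inY g \<longrightarrow> a \<in> J \<longrightarrow> \<bar>psiF FL FR a g\<bar> \<le> C * Ynorm g)
       \<and> (\<forall>g. inY g \<longrightarrow> continuous_on J (\<lambda>a. psiF FL FR a g))"
proof -
  interpret admissible_fundamental as J FL FR
    using assms(2-4) by unfold_locales
  show ?thesis
    using integrable_alphaF psiF_bound psiF_continuous by blast
qed

end
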